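(* Let $\mathcal{M}\in\mathcal{K}(2^{\mathbb{N}})$ contain every three-element subset of $\mathbb{N}$. Then $e_1,e_2,\dots$ is a shrinking basis of $T^*[\mathcal{M},\frac12]$. In particular, if moreover every element of $\mathcal{M}$ is a finite set, then $T^*[\mathcal{M},\frac12]$ is reflexive.
   Context: Elements of $2^{\mathbb{N}}$ are identified with subsets of $\mathbb{N}$; $\mathcal{K}(2^{\mathbb{N}})$ is the space of compact subsets of $2^{\mathbb{N}}$. Let $e_n=\mathbf{1}_{\{n\}}$ be the canonical basis of $c_{00}$, and for $E\subset\mathbb{N}$, $x\in c_{00}$ let $Ex=\mathbf{1}_E\cdot x$. A family $\{E_1,\dots,E_n\}$ of successive finite subsets of $\mathbb{N}$ is $\mathcal{M}$-admissible if some element of $\mathcal{M}$ contains numbers $m_1,\dots,m_n$ with $m_1\le E_1<m_2\le E_2<\dots<m_n\le E_n$. $\Theta_{\mathcal{M}}$ is the smallest absolutely convex subset of $c_{00}$ containing all $e_i$ and closed under: $\{E_1,\dots,E_n\}$ $\mathcal{M}$-admissible and $x_1,\dots,x_n\in\Theta_{\mathcal{M}}$ imply $\frac12\sum_k E_kx_k\in\Theta_{\mathcal{M}}$. $\|\cdot\|_{\mathcal{M}}$ is the Minkowski gauge of $\Theta_{\mathcal{M}}$ and $T^*[\mathcal{M},\frac12]$ is the completion of $(c_{00},\|\cdot\|_{\mathcal{M}})$; $(e_n)$ is a basis of it. A basis $(x_i)$ of $X$ is shrinking if the dual basic functionals span a dense subspace of $X^*$. *)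

theory Defs
  imports "HOL-Analysis.Analysis"
begin

text \<open>Conventions: the natural numbers are indexed from 0 (an order-preserving
reindexing of the paper's N = {1,2,...}); vectors are functions nat => real with
pointwise operations; c00 are the finitely supported ones; subsets of N are
identified with points of 2^N = {0,1}^N via their indicator functions, where
nat => real carries the product topology.\<close>

definition c00 :: "(nat \<Rightarrow> real) set" where
  "c00 = {x. finite {n. x n \<noteq> 0}}"

definition unitvec :: "nat \<Rightarrow> nat \<Rightarrow> real" where
  "unitvec i = indicator {i}"

definition restr :: "nat set \<Rightarrow> (nat \<Rightarrow> real) \<Rightarrow> nat \<Rightarrow> real" where
  "restr E x = (\<lambda>n. indicator E n * x n)"

definition admissible :: "nat set set \<Rightarrow> nat set list \<Rightarrow> bool" where
  "admissible M Es \<longleftrightarrow>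
     (\<forall>k<length Es. finite (Es!k) \<and> Es!k \<noteq> {}) \<and>
     (\<forall>k. Suc k < length Es \<longrightarrow> (\<forall>a\<in>Es!k. \<forall>b\<in>Es!Suc k. a < b)) \<and>
     (\<exists>F\<in>M. \<exists>ms::nat list. length ms = length Es \<and> set ms \<subseteq> F \<and>
        (\<forall>k<length Es. \<forall>j\<in>Es!k. ms!k \<le> j) \<and>
        (\<forall>k. Suc k < length Es \<longrightarrow> (\<forall>j\<in>Es!k. j < ms!Suc k)))"

definition absolutely_convex :: "(nat \<Rightarrow> real) set \<Rightarrow> bool" where
  "absolutely_convex S \<longleftrightarrow>
     (\<forall>x\<in>S. \<forall>y\<in>S. \<forall>a b. \<bar>a\<bar> + \<bar>b\<bar> \<le> 1 \<longrightarrow> (\<lambda>n. a * x n + b * y n) \<in> S)"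

definition closed_under_adm :: "nat set set \<Rightarrow> (nat \<Rightarrow> real) set \<Rightarrow> bool" where
  "closed_under_adm M S \<longleftrightarrow>
     (\<forall>Es xs. admissible M Es \<longrightarrow> length xs = length Es \<longrightarrow> set xs \<subseteq> S \<longrightarrow>
        (\<lambda>n. (1/2) * (\<Sum>k<length Es. restr (Es!k) (xs!k) n)) \<in> S)"

definition Theta :: "nat set set \<Rightarrow> (nat \<Rightarrow> real) set" where
  "Theta M = \<Inter>{S. S \<subseteq> c00 \<and> absolutely_convex S \<and> (\<forall>i. unitvec i \<in> S) \<and>
                      closed_under_adm M S}"

definition normM :: "nat set set \<Rightarrow> (nat \<Rightarrow> real) \<Rightarrow> real" where
  "normM M x = Inf {t. t > 0 \<and> (\<exists>y\<in>Theta M. x = (\<lambda>n. t * y n))}"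

text \<open>The dual of T*[M,1/2] (the completion of (c00, normM M)) is identified
isometrically with the bounded linear functionals on (c00, normM M); we represent
them as functions vanishing outside c00.\<close>
definition dual_space :: "nat set set \<Rightarrow> ((nat \<Rightarrow> real) \<Rightarrow> real) set" where
  "dual_space M = {f.
     (\<forall>x\<in>c00. \<forall>y\<in>c00. \<forall>a b. f (\<lambda>n. a * x n + b * y n) = a * f x + b * f y) \<and>
     (\<exists>C. \<forall>x\<in>c00. \<bar>f x\<bar> \<le> C * normM M x) \<and>
     (\<forall>x. x \<notin> c00 \<longrightarrow> f x = 0)}"

definition dual_norm :: "nat set set \<Rightarrow> ((nat \<Rightarrow> real) \<Rightarrow> real) \<Rightarrow> real" where
  "dual_norm M f = Sup {\<bar>f x\<bar> | x. x \<in> c00 \<and> normM M x \<le> 1}"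

definition proj :: "nat \<Rightarrow> (nat \<Rightarrow> real) \<Rightarrow> nat \<Rightarrow> real" where
  "proj N x = (\<lambda>n. if n < N then x n else 0)"

text \<open>(e_n) is a (Schauder) basis of the completion: since span{e_n} = c00 is dense
and each e_n is nonzero, this is equivalent to uniform boundedness of the partial sum
projections on c00 (Banach--Grunblum criterion).\<close>
definition is_basis :: "nat set set \<Rightarrow> bool" where
  "is_basis M \<longleftrightarrow> (\<exists>K. \<forall>N. \<forall>x\<in>c00. normM M (proj N x) \<le> K * normM M x)"

text \<open>Shrinking: the biorthogonal functionals e_n^* (x |-> x n) span a norm-dense
subspace of the dual.\<close>
definition shrinking :: "nat set set \<Rightarrow> bool" where
  "shrinking M \<longleftrightarrow>
     (\<forall>f\<in>dual_space M. \<forall>\<epsilon>>0. \<exists>N. \<exists>c::nat \<Rightarrow> real.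
        dual_norm M (\<lambda>x. if x \<in> c00 then f x - (\<Sum>i<N. c i * x i) else 0) < \<epsilon>)"

definition shrinking_basis :: "nat set set \<Rightarrow> bool" where
  "shrinking_basis M \<longleftrightarrow> is_basis M \<and> shrinking M"

text \<open>Reflexivity of the completion X: every bounded linear functional Phi on X^*
is evaluation at some x in X; an element x of X is represented by a normM-Cauchy
sequence (y_k) in c00, and evaluation at it is f |-> lim f(y_k).\<close>
definition reflexive_space :: "nat set set \<Rightarrow> bool" where
  "reflexive_space M \<longleftrightarrow>
     (\<forall>\<Phi> :: ((nat \<Rightarrow> real) \<Rightarrow> real) \<Rightarrow> real.
        (\<forall>f\<in>dual_space M. \<forall>g\<in>dual_space M. \<forall>a b.
            \<Phi> (\<lambda>x. a * f x + b * g x) = a * \<Phi> f + b * \<Phi> g) \<longrightarrow>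
        (\<exists>C. \<forall>f\<in>dual_space M. \<bar>\<Phi> f\<bar> \<le> C * dual_norm M f) \<longrightarrow>
        (\<exists>y :: nat \<Rightarrow> nat \<Rightarrow> real. (\<forall>k. y k \<in> c00) \<and>
           (\<forall>\<epsilon>>0. \<exists>K. \<forall>m\<ge>K. \<forall>n\<ge>K. normM M (\<lambda>i. y m i - y n i) < \<epsilon>) \<and>
           (\<forall>f\<in>dual_space M. (\<lambda>k. f (y k)) \<longlonglongrightarrow> \<Phi> f)))"

end

theory Submission
  imports Defs
begin

lemma Theta_least:
  assumes "S \<subseteq> c00" "absolutely_convex S" "\<And>i. unitvec i \<in> S" "closed_under_adm M S"
  shows "Theta M \<subseteq> S"
  using assms unfolding Theta_def by blast

lemma absolutely_convex_Inter: "(\<And>S. S \<in> F \<Longrightarrow> absolutely_convex S) \<Longrightarrow> absolutely_convex (\<Inter>F)"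
  unfolding absolutely_convex_def by blast

lemma closed_under_adm_Inter: "(\<And>S. S \<in> F \<Longrightarrow> closed_under_adm M S) \<Longrightarrow> closed_under_adm M (\<Inter>F)"
  unfolding closed_under_adm_def by (auto simp: le_Inf_iff)

lemma c00_lincomb: "x \<in> c00 \<Longrightarrow> y \<in> c00 \<Longrightarrow> (\<lambda>n. a * x n + b * y n) \<in> c00"
  unfolding c00_def mem_Collect_eq
  by (rule finite_subset[of _ "{n. x n \<noteq> 0} \<union> {n. y n \<noteq> 0}"]) auto

lemma c00_add: "x \<in> c00 \<Longrightarrow> y \<in> c00 \<Longrightarrow> (\<lambda>n. x n + y n) \<in> c00"
  using c00_lincomb[of x y 1 1] by simp

lemma c00_scale: "x \<in> c00 \<Longrightarrow> (\<lambda>n. a * x n) \<in> c00"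
  using c00_lincomb[of x x a 0] by simp

lemma c00_minus: "x \<in> c00 \<Longrightarrow> (\<lambda>n. - x n) \<in> c00"
  using c00_scale[of x "-1"] by simp

lemma zero_in_c00: "(\<lambda>n. 0) \<in> c00"
  by (simp add: c00_def)

lemma c00_if_bounded_support: "(\<And>n. N \<le> n \<Longrightarrow> x n = 0) \<Longrightarrow> x \<in> c00"
  unfolding c00_def mem_Collect_eq
  by (rule finite_subset[of _ "{..<N}"]) (auto simp: not_less[symmetric])

lemma unitvec_in_c00: "unitvec i \<in> c00"
  by (rule c00_if_bounded_support[of "Suc i"]) (simp add: unitvec_def)

lemma restr_in_c00: "x \<in> c00 \<Longrightarrow> restr E x \<in> c00"
  unfolding c00_def restr_def by (auto elim: rev_finite_subset)

lemma c00_sum: "finite K \<Longrightarrow> (\<And>k. k \<in> K \<Longrightarrow> f k \<in> c00) \<Longrightarrow> (\<lambda>n. \<Sum>k\<in>K. f k n) \<in> c00"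
  by (induction K rule: finite_induct) (auto simp: zero_in_c00 intro: c00_add)

lemma closed_under_adm_c00: "closed_under_adm M c00"
  unfolding closed_under_adm_def
  by (auto intro!: c00_scale c00_sum restr_in_c00 nth_mem simp del: times_divide_eq_left)

lemma absolutely_convex_c00: "absolutely_convex c00"
  unfolding absolutely_convex_def by (auto intro: c00_lincomb)

lemma Theta_subset_c00: "Theta M \<subseteq> c00"
  unfolding Theta_def
  using absolutely_convex_c00 closed_under_adm_c00 unitvec_in_c00 by blast

lemma Theta_in_c00: "x \<in> Theta M \<Longrightarrow> x \<in> c00"
  using Theta_subset_c00 by blast

lemma unitvec_in_Theta: "unitvec i \<in> Theta M"
  unfolding Theta_def by blast

lemma absolutely_convex_Theta: "absolutely_convex (Theta M)"
  unfolding Theta_def by (rule absolutely_convex_Inter) blast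

lemma closed_under_adm_Theta: "closed_under_adm M (Theta M)"
  unfolding Theta_def by (rule closed_under_adm_Inter) blast

lemma Theta_lincomb:
  "x \<in> Theta M \<Longrightarrow> y \<in> Theta M \<Longrightarrow> \<bar>a\<bar> + \<bar>b\<bar> \<le> 1 \<Longrightarrow> (\<lambda>n. a * x n + b * y n) \<in> Theta M"
  using absolutely_convex_Theta unfolding absolutely_convex_def by blast

lemma Theta_admissible:
  "admissible M Es \<Longrightarrow> length xs = length Es \<Longrightarrow> set xs \<subseteq> Theta M \<Longrightarrow>
     (\<lambda>n. (1/2) * (\<Sum>k<length Es. restr (Es!k) (xs!k) n)) \<in> Theta M"
  using closed_under_adm_Theta unfolding closed_under_adm_def by blast

lemma Theta_zero: "(\<lambda>n. 0) \<in> Theta M"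
  using Theta_lincomb[of "unitvec 0" M "unitvec 0" 0 0] unitvec_in_Theta by simp

lemma Theta_scale: "x \<in> Theta M \<Longrightarrow> \<bar>a\<bar> \<le> 1 \<Longrightarrow> (\<lambda>n. a * x n) \<in> Theta M"
  using Theta_lincomb[of x M x a 0] by simp

lemma Theta_induct[consumes 1, case_names unit lincomb admissible]:
  assumes "z \<in> Theta M"
    and "\<And>i. P (unitvec i)"
    and "\<And>x y a b. x \<in> Theta M \<Longrightarrow> y \<in> Theta M \<Longrightarrow> P x \<Longrightarrow> P y \<Longrightarrow> \<bar>a\<bar> + \<bar>b\<bar> \<le> 1 \<Longrightarrow>
           P (\<lambda>n. a * x n + b * y n)"
    and "\<And>Es xs. admissible M Es \<Longrightarrow> length xs = length Es \<Longrightarrow> set xs \<subseteq> Theta M \<Longrightarrow>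
           (\<And>x. x \<in> set xs \<Longrightarrow> P x) \<Longrightarrow> P (\<lambda>n. (1/2) * (\<Sum>k<length Es. restr (Es!k) (xs!k) n))"
  shows "P z"
proof -
  have "Theta M \<subseteq> {x \<in> Theta M. P x}"
  proof (rule Theta_least)
    show "absolutely_convex {x \<in> Theta M. P x}"
      unfolding absolutely_convex_def using assms(3) Theta_lincomb by auto
    show "closed_under_adm M {x \<in> Theta M. P x}"
      unfolding closed_under_adm_def using Theta_admissible assms(4) by (simp add: subset_iff)
  qed (use Theta_subset_c00 assms(2) unitvec_in_Theta in auto)
  then show ?thesis using assms(1) by blast
qed

lemma restr_unitvec: "restr E (unitvec i) = (if i \<in> E then unitvec i else (\<lambda>n. 0))"
  by (auto simp: restr_def unitvec_def fun_eq_iff split: split_indicator)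

lemma restr_admissible_sum:
  "length xs = length Es \<Longrightarrow>
   restr E (\<lambda>n. c * (\<Sum>k<length Es. restr (Es!k) (xs!k) n)) =
   (\<lambda>n. c * (\<Sum>k<length Es. restr (Es!k) (map (restr E) xs ! k) n))"
  by (auto simp: restr_def fun_eq_iff sum_distrib_left intro!: sum.cong)

lemma Theta_restr: "x \<in> Theta M \<Longrightarrow> restr E x \<in> Theta M"
proof (induction x rule: Theta_induct)
  case (unit i)
  then show ?case by (simp add: restr_unitvec unitvec_in_Theta Theta_zero)
next
  case (lincomb x y a b)
  have "restr E (\<lambda>n. a * x n + b * y n) = (\<lambda>n. a * restr E x n + b * restr E y n)"
    by (simp add: restr_def fun_eq_iff algebra_simps)
  then show ?case using lincomb by (simp add: Theta_lincomb)
next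
  case (admissible Es xs)
  have "(\<lambda>n. (1/2) * (\<Sum>k<length Es. restr (Es!k) (map (restr E) xs ! k) n)) \<in> Theta M"
    using admissible by (intro Theta_admissible) auto
  then show ?case by (simp only: restr_admissible_sum[OF admissible(2)])
qed

lemma admissible_less:
  assumes "admissible M Es" "i < j" "j < length Es" "a \<in> Es!i" "b \<in> Es!j"
  shows "a < b"
  using assms(2-5)
proof (induction j arbitrary: b)
  case (Suc j)
  obtain c where c: "c \<in> Es!j"
    using assms(1) Suc.prems unfolding admissible_def by (metis Suc_lessD all_not_in_conv)
  have "c < b" "i = j \<or> a < c"
    using assms(1) Suc c unfolding admissible_def by auto
  then show ?case
    using assms(1) Suc.prems unfolding admissible_def by auto
qed simp

lemma admissible_sum_at:
  assumes "admissible M Es" "k < length Es" "n \<in> Es!k"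
  shows "(\<Sum>j<length Es. restr (Es!j) (xs!j) n) = (xs!k) n"
proof -
  have "restr (Es!j) (xs!j) n = 0" if "j < length Es" "j \<noteq> k" for j
    using admissible_less[OF assms(1), of j k n n] admissible_less[OF assms(1), of k j n n]
      that assms(2,3) by (cases "j < k") (auto simp: restr_def split: split_indicator)
  then have "(\<Sum>j<length Es. restr (Es!j) (xs!j) n) = restr (Es!k) (xs!k) n"
    using assms(2) by (subst sum.mono_neutral_right[of _ "{k}"]) auto
  then show ?thesis using assms(3) by (simp add: restr_def)
qed

lemma Theta_abs_le_1: "x \<in> Theta M \<Longrightarrow> \<bar>x n\<bar> \<le> 1"
proof (induction x rule: Theta_induct)
  case (unit i)
  then show ?case by (simp add: unitvec_def)
next
  case (lincomb x y a b)
  have "\<bar>a * x n + b * y n\<bar> \<le> \<bar>a\<bar> * \<bar>x n\<bar> + \<bar>b\<bar> * \<bar>y n\<bar>"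
    by (metis abs_mult abs_triangle_ineq)
  also have "\<dots> \<le> \<bar>a\<bar> + \<bar>b\<bar>"
    using lincomb by (intro add_mono mult_left_le) auto
  finally show ?case using lincomb by simp
next
  case (admissible Es xs)
  show ?case
  proof (cases "\<exists>k<length Es. n \<in> Es!k")
    case True
    then obtain k where k: "k < length Es" "n \<in> Es!k" by blast
    then have "\<bar>(xs!k) n\<bar> \<le> 1"
      using admissible by (simp add: nth_mem)
    then show ?thesis
      using admissible_sum_at[OF admissible(1) k] by (simp add: abs_mult)
  next
    case False
    then show ?thesis by (simp add: restr_def)
  qed
qed

lemma normM_eq_Inf: "normM M x = Inf {t. t > 0 \<and> (\<lambda>n. x n / t) \<in> Theta M}"
proof -
  have "(\<exists>y\<in>Theta M. x = (\<lambda>n. t * y n)) \<longleftrightarrow> (\<lambda>n. x n / t) \<in> Theta M" if "t > 0" for t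
  proof
    assume "\<exists>y\<in>Theta M. x = (\<lambda>n. t * y n)"
    then show "(\<lambda>n. x n / t) \<in> Theta M" using that by auto
  next
    assume "(\<lambda>n. x n / t) \<in> Theta M"
    then show "\<exists>y\<in>Theta M. x = (\<lambda>n. t * y n)" using that by (intro bexI[of _ "\<lambda>n. x n / t"]) auto
  qed
  then show ?thesis unfolding normM_def by (metis (lifting))
qed

lemma normM_le: "t > 0 \<Longrightarrow> (\<lambda>n. x n / t) \<in> Theta M \<Longrightarrow> normM M x \<le> t"
  unfolding normM_eq_Inf by (rule cInf_lower) (auto intro: bdd_belowI[of _ 0])

lemma Theta_convex_div:
  assumes "t > 0" "s > 0" "(\<lambda>n. x n / t) \<in> Theta M" "(\<lambda>n. y n / s) \<in> Theta M"
  shows "(\<lambda>n. (x n + y n) / (t + s)) \<in> Theta M"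
proof -
  have "(\<lambda>n. (t / (t + s)) * (x n / t) + (s / (t + s)) * (y n / s)) \<in> Theta M"
    using assms by (intro Theta_lincomb) (auto simp: field_simps)
  moreover have "(t / (t + s)) * (x n / t) + (s / (t + s)) * (y n / s) = (x n + y n) / (t + s)" for n
    using assms(1,2) by (simp add: add_divide_distrib)
  ultimately show ?thesis by simp
qed

lemma Theta_absorbs_c00: "x \<in> c00 \<Longrightarrow> \<exists>t>0. (\<lambda>n. x n / t) \<in> Theta M"
proof -
  have "\<exists>t>0. (\<lambda>n. x n / t) \<in> Theta M" if "finite S" "{n. x n \<noteq> 0} \<subseteq> S" for S x
    using that
  proof (induction S arbitrary: x rule: finite_induct)
    case empty
    then have "(\<lambda>n. x n / 1) = (\<lambda>n. 0)" by auto
    then show ?case using Theta_zero by (intro exI[of _ 1]) auto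
  next
    case (insert p S)
    define x' where "x' = (\<lambda>n. if n = p then 0 else x n)"
    have "{n. x' n \<noteq> 0} \<subseteq> S" using insert.prems unfolding x'_def by auto
    then obtain t where t: "t > 0" "(\<lambda>n. x' n / t) \<in> Theta M" using insert.IH by blast
    define s where "s = \<bar>x p\<bar> + 1"
    have "(\<lambda>n. (x p / s) * unitvec p n) \<in> Theta M"
      by (intro Theta_scale unitvec_in_Theta) (auto simp: s_def)
    then have "(\<lambda>n. (x p * unitvec p n) / s) \<in> Theta M" by simp
    then have "(\<lambda>n. (x' n + x p * unitvec p n) / (t + s)) \<in> Theta M"
      using t by (intro Theta_convex_div) (auto simp: s_def)
    moreover have "x' n + x p * unitvec p n = x n" for n
      unfolding x'_def unitvec_def by simp
    moreover have "t + s > 0" using t by (simp add: s_def add_pos_pos)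
    ultimately show ?case by auto
  qed
  then show "x \<in> c00 \<Longrightarrow> ?thesis" unfolding c00_def by blast
qed

lemma normM_nonneg: "x \<in> c00 \<Longrightarrow> 0 \<le> normM M x"
  unfolding normM_eq_Inf using Theta_absorbs_c00 by (intro cInf_greatest) auto

lemma Theta_if_normM_less: "x \<in> c00 \<Longrightarrow> normM M x < t \<Longrightarrow> (\<lambda>n. x n / t) \<in> Theta M"
proof -
  assume x: "x \<in> c00" and "normM M x < t"
  then obtain s where s: "s > 0" "(\<lambda>n. x n / s) \<in> Theta M" "s < t"
    using cInf_lessD[of "{t. t > 0 \<and> (\<lambda>n. x n / t) \<in> Theta M}" t] Theta_absorbs_c00[OF x]
    unfolding normM_eq_Inf by auto
  then have "(\<lambda>n. (s / t) * (x n / s)) \<in> Theta M" by (intro Theta_scale) auto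
  then show ?thesis using s by simp
qed

lemma normM_leI:
  assumes "x \<in> c00" "r \<ge> 0" "\<And>t. t > r \<Longrightarrow> (\<lambda>n. x n / t) \<in> Theta M"
  shows "normM M x \<le> r"
proof (rule field_le_epsilon)
  fix e :: real
  assume "e > 0"
  then show "normM M x \<le> r + e" using assms by (intro normM_le) auto
qed

lemma normM_le_1_if_Theta: "x \<in> Theta M \<Longrightarrow> normM M x \<le> 1"
  using normM_le[of 1 x M] by simp

lemma normM_zero: "normM M (\<lambda>n. 0) = 0"
  using normM_leI[of "\<lambda>n. 0" 0 M] normM_nonneg[of "\<lambda>n. 0" M] zero_in_c00 Theta_zero by simp

lemma normM_triangle:
  assumes "x \<in> c00" "y \<in> c00"
  shows "normM M (\<lambda>n. x n + y n) \<le> normM M x + normM M y"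
proof (rule field_le_epsilon)
  fix e :: real
  assume e: "e > 0"
  let ?t = "normM M x + e/2" and ?s = "normM M y + e/2"
  have pos: "?t > 0" "?s > 0"
    using normM_nonneg assms e by (auto intro: add_nonneg_pos)
  have "(\<lambda>n. x n / ?t) \<in> Theta M" "(\<lambda>n. y n / ?s) \<in> Theta M"
    using assms e by (auto intro!: Theta_if_normM_less)
  then have "normM M (\<lambda>n. x n + y n) \<le> ?t + ?s"
    using pos by (intro normM_le Theta_convex_div) auto
  then show "normM M (\<lambda>n. x n + y n) \<le> normM M x + normM M y + e" by simp
qed

lemma normM_scale_le:
  assumes "x \<in> c00"
  shows "normM M (\<lambda>n. c * x n) \<le> \<bar>c\<bar> * normM M x"
proof (rule normM_leI)
  fix t
  assume t: "\<bar>c\<bar> * normM M x < t"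
  show "(\<lambda>n. c * x n / t) \<in> Theta M"
  proof (cases "c = 0")
    case False
    then have "(\<lambda>n. x n / (t / \<bar>c\<bar>)) \<in> Theta M"
      using t assms by (intro Theta_if_normM_less) (auto simp: field_simps)
    then have "(\<lambda>n. sgn c * (x n / (t / \<bar>c\<bar>))) \<in> Theta M"
      by (rule Theta_scale) (simp add: abs_sgn)
    moreover have "(\<lambda>n. sgn c * (x n / (t / \<bar>c\<bar>))) = (\<lambda>n. c * x n / t)"
      using False by (intro ext, cases "c > 0") (auto simp: sgn_if)
    ultimately show ?thesis by metis
  qed (simp add: Theta_zero)
qed (use assms normM_nonneg c00_scale in auto)

lemma normM_scale: "x \<in> c00 \<Longrightarrow> normM M (\<lambda>n. c * x n) = \<bar>c\<bar> * normM M x"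
proof (cases "c = 0")
  case False
  assume x: "x \<in> c00"
  have "normM M x = normM M (\<lambda>n. (1/c) * (c * x n))"
    using False by simp
  also have "\<dots> \<le> \<bar>1/c\<bar> * normM M (\<lambda>n. c * x n)"
    by (rule normM_scale_le[OF c00_scale[OF x]])
  also have "\<dots> = normM M (\<lambda>n. c * x n) / \<bar>c\<bar>"
    by simp
  finally have "\<bar>c\<bar> * normM M x \<le> normM M (\<lambda>n. c * x n)"
    using False by (simp add: pos_le_divide_eq mult.commute)
  then show ?thesis using normM_scale_le[OF x, of M c] by simp
qed (simp add: normM_zero)

lemma normM_minus: "x \<in> c00 \<Longrightarrow> normM M (\<lambda>n. - x n) = normM M x"
  using normM_scale[of x M "-1"] by simp

lemma abs_le_normM: "x \<in> c00 \<Longrightarrow> \<bar>x n\<bar> \<le> normM M x"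
proof (rule field_le_epsilon)
  fix e :: real
  assume x: "x \<in> c00" and e: "e > 0"
  have t: "normM M x + e > 0" using normM_nonneg[OF x, of M] e by simp
  have "\<bar>x n / (normM M x + e)\<bar> \<le> 1"
    using x e by (intro Theta_abs_le_1[OF Theta_if_normM_less[of x M]]) auto
  then have "\<bar>x n\<bar> / (normM M x + e) \<le> 1"
    by (simp only: abs_divide abs_of_pos[OF t])
  then show "\<bar>x n\<bar> \<le> normM M x + e" using t by (simp add: pos_divide_le_eq)
qed

lemma normM_restr: "x \<in> c00 \<Longrightarrow> normM M (restr E x) \<le> normM M x"
proof (rule normM_leI)
  fix t
  assume "x \<in> c00" "normM M x < t"
  then have "restr E (\<lambda>n. x n / t) \<in> Theta M" by (intro Theta_restr Theta_if_normM_less)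
  then show "(\<lambda>n. restr E x n / t) \<in> Theta M" by (simp add: restr_def)
qed (auto intro: restr_in_c00 normM_nonneg)

lemma dual_linear:
  "f \<in> dual_space M \<Longrightarrow> x \<in> c00 \<Longrightarrow> y \<in> c00 \<Longrightarrow> f (\<lambda>n. a * x n + b * y n) = a * f x + b * f y"
  unfolding dual_space_def by blast

lemma dual_bound: "f \<in> dual_space M \<Longrightarrow> \<exists>C\<ge>0. \<forall>x\<in>c00. \<bar>f x\<bar> \<le> C * normM M x"
proof -
  assume "f \<in> dual_space M"
  then obtain C where C: "\<forall>x\<in>c00. \<bar>f x\<bar> \<le> C * normM M x" unfolding dual_space_def by blast
  have "C * normM M x \<le> max C 0 * normM M x" if "x \<in> c00" for x
    using normM_nonneg[OF that] by (intro mult_right_mono) auto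
  then show ?thesis using C by (intro exI[of _ "max C 0"]) force
qed

lemma dual_scale: "f \<in> dual_space M \<Longrightarrow> x \<in> c00 \<Longrightarrow> f (\<lambda>n. a * x n) = a * f x"
  using dual_linear[of f M x x a 0] by simp

lemma dual_zero: "f \<in> dual_space M \<Longrightarrow> f (\<lambda>n. 0) = 0"
  using dual_scale[of f M "\<lambda>n. 0" 0] zero_in_c00 by simp

lemma dual_add: "f \<in> dual_space M \<Longrightarrow> x \<in> c00 \<Longrightarrow> y \<in> c00 \<Longrightarrow> f (\<lambda>n. x n + y n) = f x + f y"
  using dual_linear[of f M x y 1 1] by simp

lemma dual_sum:
  assumes "f \<in> dual_space M" "finite I" "\<And>i. i \<in> I \<Longrightarrow> v i \<in> c00"
  shows "f (\<lambda>n. \<Sum>i\<in>I. v i n) = (\<Sum>i\<in>I. f (v i))"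
  using assms(2,3)
proof (induction I rule: finite_induct)
  case (insert i I)
  then show ?case using dual_add[OF assms(1) _ c00_sum[of I v]] by simp
qed (simp add: dual_zero[OF assms(1)])

lemma dual_space_lincomb:
  assumes f: "f \<in> dual_space M" and g: "g \<in> dual_space M"
  shows "(\<lambda>x. a * f x + b * g x) \<in> dual_space M"
proof -
  obtain C D where C: "\<forall>x\<in>c00. \<bar>f x\<bar> \<le> C * normM M x" and D: "\<forall>x\<in>c00. \<bar>g x\<bar> \<le> D * normM M x"
    using dual_bound[OF f] dual_bound[OF g] by blast
  have "\<bar>a * f x + b * g x\<bar> \<le> (\<bar>a\<bar> * C + \<bar>b\<bar> * D) * normM M x" if "x \<in> c00" for x
  proof -
    have "\<bar>a * f x + b * g x\<bar> \<le> \<bar>a\<bar> * \<bar>f x\<bar> + \<bar>b\<bar> * \<bar>g x\<bar>"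
      by (metis abs_mult abs_triangle_ineq)
    also have "\<dots> \<le> \<bar>a\<bar> * (C * normM M x) + \<bar>b\<bar> * (D * normM M x)"
      using C D that by (intro add_mono mult_left_mono) auto
    finally show ?thesis by (simp add: algebra_simps)
  qed
  moreover have "a * f (\<lambda>n. c * x n + d * y n) + b * g (\<lambda>n. c * x n + d * y n) =
      c * (a * f x + b * g x) + d * (a * f y + b * g y)" if "x \<in> c00" "y \<in> c00" for x y c d
    using dual_linear[OF f that] dual_linear[OF g that] by (simp add: algebra_simps)
  moreover have "a * f x + b * g x = 0" if "x \<notin> c00" for x
    using f g that unfolding dual_space_def by simp
  ultimately show ?thesis unfolding dual_space_def by blast
qed

lemma dual_norm_bdd: "f \<in> dual_space M \<Longrightarrow> bdd_above {\<bar>f x\<bar> | x. x \<in> c00 \<and> normM M x \<le> 1}"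
proof -
  assume "f \<in> dual_space M"
  then obtain C where "C \<ge> 0" "\<forall>x\<in>c00. \<bar>f x\<bar> \<le> C * normM M x" using dual_bound by blast
  then have "\<bar>f x\<bar> \<le> C" if "x \<in> c00" "normM M x \<le> 1" for x
    using that by (meson mult_left_le order_trans)
  then show ?thesis by (intro bdd_aboveI[of _ C]) auto
qed

lemma dual_norm_upper:
  "f \<in> dual_space M \<Longrightarrow> x \<in> c00 \<Longrightarrow> normM M x \<le> 1 \<Longrightarrow> \<bar>f x\<bar> \<le> dual_norm M f"
  unfolding dual_norm_def using dual_norm_bdd by (intro cSup_upper) auto

lemma dual_norm_least:
  "(\<And>x. x \<in> c00 \<Longrightarrow> normM M x \<le> 1 \<Longrightarrow> \<bar>f x\<bar> \<le> r) \<Longrightarrow> dual_norm M f \<le> r"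
  unfolding dual_norm_def using zero_in_c00 normM_zero by (intro cSup_least) fastforce+

lemma dual_norm_nonneg: "f \<in> dual_space M \<Longrightarrow> 0 \<le> dual_norm M f"
  using dual_norm_upper[of f M "\<lambda>n. 0"] zero_in_c00 normM_zero by force

lemma abs_le_dual_norm_mult_normM:
  assumes f: "f \<in> dual_space M" and x: "x \<in> c00"
  shows "\<bar>f x\<bar> \<le> dual_norm M f * normM M x"
proof (rule field_le_epsilon)
  fix e :: real
  assume e: "e > 0"
  define D where "D = dual_norm M f"
  have D: "D \<ge> 0" unfolding D_def using dual_norm_nonneg[OF f] .
  define t where "t = normM M x + e / (D + 1)"
  have t: "t > 0" "normM M x < t"
    unfolding t_def using normM_nonneg[OF x, of M] e D by (auto intro: add_nonneg_pos)
  have "(\<lambda>n. (1/t) * x n) \<in> Theta M"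
    using Theta_if_normM_less[OF x t(2)] by simp
  then have "\<bar>f (\<lambda>n. (1/t) * x n)\<bar> \<le> D"
    unfolding D_def by (intro dual_norm_upper f Theta_in_c00 normM_le_1_if_Theta)
  moreover have "\<bar>f x\<bar> = t * \<bar>f (\<lambda>n. (1/t) * x n)\<bar>"
    using dual_scale[OF f x, of "1/t"] t by (simp add: abs_mult)
  ultimately have "\<bar>f x\<bar> \<le> D * t"
    using t by (simp add: mult.commute mult_left_mono)
  also have "\<dots> \<le> D * normM M x + e"
    unfolding t_def using D e by (simp add: algebra_simps field_simps)
  finally show "\<bar>f x\<bar> \<le> D * normM M x + e" unfolding D_def .
qed

definition supp :: "(nat \<Rightarrow> real) \<Rightarrow> nat set" where
  "supp x = {n. x n \<noteq> 0}"

lemma finite_supp: "x \<in> c00 \<Longrightarrow> finite (supp x)"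
  unfolding c00_def supp_def by simp

lemma supp_empty_iff: "supp x = {} \<longleftrightarrow> x = (\<lambda>n. 0)"
  unfolding supp_def by auto

lemma restr_supp: "restr (supp x) x = x"
  unfolding restr_def supp_def by (auto simp: fun_eq_iff indicator_def)

lemma supp_nonempty_if_dual_pos:
  "f \<in> dual_space M \<Longrightarrow> f x > 0 \<Longrightarrow> supp x \<noteq> {}"
  using dual_zero supp_empty_iff by fastforce

subsection \<open>The basis is shrinking\<close>

lemma admissible_three:
  assumes M3: "\<forall>A :: nat set. card A = 3 \<longrightarrow> A \<in> M"
    and fin: "finite E1" "finite E2" "finite E3" and ne: "E1 \<noteq> {}" "E2 \<noteq> {}" "E3 \<noteq> {}"
    and less: "\<forall>a\<in>E1. \<forall>b\<in>E2. a < b" "\<forall>a\<in>E2. \<forall>b\<in>E3. a < b"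
  shows "admissible M [E1, E2, E3]"
proof -
  let ?Es = "[E1, E2, E3]" and ?ms = "[Min E1, Min E2, Min E3]"
  have Min: "Min E1 \<in> E1" "Min E2 \<in> E2" "Min E3 \<in> E3" using fin ne by auto
  then have "Min E1 < Min E2" "Min E2 < Min E3" using less by auto
  then have "card (set ?ms) = 3" by simp
  then have "set ?ms \<in> M" using M3 by blast
  moreover have "\<forall>k<length ?Es. finite (?Es!k) \<and> ?Es!k \<noteq> {} \<and> (\<forall>j\<in>?Es!k. ?ms!k \<le> j)"
    using fin ne by (auto simp: less_Suc_eq)
  moreover have "\<forall>k. Suc k < length ?Es \<longrightarrow> (\<forall>a\<in>?Es!k. \<forall>b\<in>?Es!Suc k. a < b) \<and>
      (\<forall>j\<in>?Es!k. j < ?ms!Suc k)"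
    using less Min by (auto simp: less_Suc_eq)
  moreover have "length ?ms = length ?Es" by simp
  ultimately show ?thesis
    unfolding admissible_def by (intro conjI bexI[of _ "set ?ms"] exI[of _ ?ms]) blast+
qed

lemma normM_three_blocks:
  assumes M3: "\<forall>A :: nat set. card A = 3 \<longrightarrow> A \<in> M"
    and c00: "u1 \<in> c00" "u2 \<in> c00" "u3 \<in> c00"
    and ne: "supp u1 \<noteq> {}" "supp u2 \<noteq> {}" "supp u3 \<noteq> {}"
    and less: "\<forall>a\<in>supp u1. \<forall>b\<in>supp u2. a < b" "\<forall>a\<in>supp u2. \<forall>b\<in>supp u3. a < b"
    and r: "normM M u1 \<le> r" "normM M u2 \<le> r" "normM M u3 \<le> r"
  shows "normM M (\<lambda>n. u1 n + u2 n + u3 n) \<le> 2 * r"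
proof (rule normM_leI)
  let ?Es = "[supp u1, supp u2, supp u3]"
  fix t
  assume t: "2 * r < t"
  let ?xs = "[(\<lambda>n. u1 n / (t/2)), (\<lambda>n. u2 n / (t/2)), (\<lambda>n. u3 n / (t/2))]"
  have "set ?xs \<subseteq> Theta M"
    using r t c00 Theta_if_normM_less[of _ M "t/2"] by (simp del: divide_divide_eq_right)
  then have "(\<lambda>n. (1/2) * (\<Sum>k<length ?Es. restr (?Es!k) (?xs!k) n)) \<in> Theta M"
    using admissible_three[OF M3 finite_supp[OF c00(1)] finite_supp[OF c00(2)] finite_supp[OF c00(3)]
        ne less]
    by (intro Theta_admissible) auto
  moreover have "restr (supp u) (\<lambda>n. u n / (t/2)) = (\<lambda>n. u n / (t/2))" for u
    unfolding restr_def supp_def by (auto simp: indicator_def)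
  ultimately show "(\<lambda>n. (u1 n + u2 n + u3 n) / t) \<in> Theta M"
    by (simp add: numeral_3_eq_3 lessThan_Suc add_divide_distrib ac_simps del: divide_divide_eq_right)
qed (use c00 r normM_nonneg[OF c00(1), of M] in \<open>auto intro: c00_add\<close>)

lemma obtain_block_subsequence:
  assumes "\<And>N. finite (supp (g N))" "\<And>N. supp (g N) \<noteq> {}" "\<And>N. supp (g N) \<subseteq> {N..}"
  obtains lo where "strict_mono lo" "\<And>j. supp (g (lo j)) \<subseteq> {lo j..<lo (Suc j)}"
proof
  define lo :: "nat \<Rightarrow> nat" where "lo = rec_nat 0 (\<lambda>j l. Max (supp (g l)) + 1)"
  have lo_Suc: "lo (Suc j) = Max (supp (g (lo j))) + 1" for j unfolding lo_def by simp
  show blocks: "supp (g (lo j)) \<subseteq> {lo j..<lo (Suc j)}" for j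
    using assms(3)[of "lo j"] Max_ge[OF assms(1)[of "lo j"]] unfolding lo_Suc by fastforce
  show "strict_mono lo"
  proof (rule strict_monoI_Suc)
    fix j
    obtain n where "n \<in> supp (g (lo j))" using assms(2) by blast
    then show "lo j < lo (Suc j)" using blocks[of j] by fastforce
  qed
qed

lemma supp_sum_blocks:
  assumes "mono lo" "\<And>j. supp (z j) \<subseteq> {lo j..<lo (Suc j)}"
  shows "supp (\<lambda>n. \<Sum>j\<in>{a..<b}. z j n) \<subseteq> {lo a..<lo b}"
proof
  fix n
  assume "n \<in> supp (\<lambda>n. \<Sum>j\<in>{a..<b}. z j n)"
  then obtain j where j: "j \<in> {a..<b}" "n \<in> supp (z j)"
    unfolding supp_def by (meson mem_Collect_eq sum.neutral)
  then have "lo a \<le> lo j" "lo (Suc j) \<le> lo b"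
    using assms(1) by (auto intro: monoD)
  then show "n \<in> {lo a..<lo b}" using assms(2)[of j] j(2) by auto
qed

lemma triadic_block_sums:
  assumes M3: "\<forall>A :: nat set. card A = 3 \<longrightarrow> A \<in> M" and f: "f \<in> dual_space M" and "\<epsilon> > 0"
    and lo: "mono lo" and z: "\<And>j. z j \<in> c00" "\<And>j. supp (z j) \<subseteq> {lo j..<lo (Suc j)}"
    and bounds: "\<And>j. normM M (z j) \<le> 1" "\<And>j. \<epsilon> \<le> f (z j)"
  shows "normM M (\<lambda>n. \<Sum>j\<in>{s..<s+3^k}. z j n) \<le> 2^k \<and> 3^k * \<epsilon> \<le> f (\<lambda>n. \<Sum>j\<in>{s..<s+3^k}. z j n)"
proof (induction k arbitrary: s)
  case 0
  then show ?case using bounds by simp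
next
  case (Suc k)
  define X where "X s = (\<lambda>n. \<Sum>j\<in>{s..<s+3^k}. z j n)" for s
  let ?b = "s + 3^k" and ?c = "s + 3^k + 3^k"
  have split: "(\<lambda>n. \<Sum>j\<in>{s..<s+3^Suc k}. z j n) = (\<lambda>n. X s n + X ?b n + X ?c n)"
  proof
    fix n
    have e: "s + 3^Suc k = ?c + 3^k" by simp
    have "(\<Sum>j\<in>{s..<s+3^Suc k}. z j n) = (\<Sum>j\<in>{s..<?b}. z j n) + (\<Sum>j\<in>{?b..<?c + 3^k}. z j n)"
      unfolding e by (rule sum.atLeastLessThan_concat[symmetric]) auto
    also have "(\<Sum>j\<in>{?b..<?c + 3^k}. z j n) = (\<Sum>j\<in>{?b..<?c}. z j n) + (\<Sum>j\<in>{?c..<?c + 3^k}. z j n)"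
      by (rule sum.atLeastLessThan_concat[symmetric]) auto
    finally show "(\<Sum>j\<in>{s..<s+3^Suc k}. z j n) = X s n + X ?b n + X ?c n"
      unfolding X_def by simp
  qed
  have X_c00: "X u \<in> c00" for u
    unfolding X_def using z(1) by (intro c00_sum) auto
  have supp_X: "supp (X u) \<subseteq> {lo u..<lo (u + 3^k)}" for u
    unfolding X_def using lo z(2) by (rule supp_sum_blocks)
  have IH: "normM M (X u) \<le> 2^k" "3^k * \<epsilon> \<le> f (X u)" for u
    using Suc.IH[of u] by (simp_all add: X_def)
  have ne: "supp (X u) \<noteq> {}" for u
    using IH(2)[of u] \<open>\<epsilon> > 0\<close> supp_nonempty_if_dual_pos[OF f, of "X u"]
    by (meson order_less_le_trans zero_less_mult_iff zero_less_numeral zero_less_power)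
  have less: "\<forall>a\<in>supp (X u). \<forall>b\<in>supp (X (u + 3^k)). a < b" for u
    using supp_X[of u] supp_X[of "u + 3^k"] by fastforce
  have "normM M (\<lambda>n. X s n + X ?b n + X ?c n) \<le> 2 * 2^k"
    by (rule normM_three_blocks[OF M3 X_c00 X_c00 X_c00 ne ne ne less less IH(1) IH(1) IH(1)])
  moreover have "f (\<lambda>n. X s n + X ?b n + X ?c n) = f (X s) + f (X ?b) + f (X ?c)"
    using dual_add[OF f] X_c00 c00_add by simp
  ultimately show ?case
    unfolding split using IH(2)[of s] IH(2)[of ?b] IH(2)[of ?c] by (simp add: mult.assoc)
qed

lemma tail_functional_small:
  assumes M3: "\<forall>A :: nat set. card A = 3 \<longrightarrow> A \<in> M" and f: "f \<in> dual_space M" and e: "\<epsilon> > 0"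
  shows "\<exists>N. \<forall>x\<in>c00. normM M x \<le> 1 \<longrightarrow> \<bar>f (restr {N..} x)\<bar> \<le> \<epsilon>"
proof (rule ccontr)
  assume contra: "\<not> ?thesis"
  have "\<exists>x\<in>c00. normM M x \<le> 1 \<and> supp x \<subseteq> {N..} \<and> f x > \<epsilon>" for N
  proof -
    obtain x where x: "x \<in> c00" "normM M x \<le> 1" "\<epsilon> < \<bar>f (restr {N..} x)\<bar>"
      using contra by (auto simp: not_le)
    let ?y = "restr {N..} x"
    have y: "?y \<in> c00" "normM M ?y \<le> 1" "supp ?y \<subseteq> {N..}"
      using restr_in_c00[OF x(1)] order_trans[OF normM_restr[OF x(1)] x(2)]
      by (auto simp: supp_def restr_def split: split_indicator_asm)
    show ?thesis
    proof (cases "f ?y > \<epsilon>")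
      case False
      then have "f (\<lambda>n. - ?y n) > \<epsilon>"
        using x(3) dual_scale[OF f y(1), of "-1"] by simp
      then show ?thesis
        using y c00_minus normM_minus[OF y(1)] by (intro bexI[of _ "\<lambda>n. - ?y n"]) (auto simp: supp_def)
    qed (use y in blast)
  qed
  then obtain g where g: "\<And>N. g N \<in> c00" "\<And>N. normM M (g N) \<le> 1" "\<And>N. supp (g N) \<subseteq> {N..}"
    "\<And>N. f (g N) > \<epsilon>"
    by metis
  have "supp (g N) \<noteq> {}" for N
    using g(4) e supp_nonempty_if_dual_pos[OF f] by (meson order.strict_trans)
  then obtain lo where lo: "strict_mono lo" "\<And>j. supp (g (lo j)) \<subseteq> {lo j..<lo (Suc j)}"
    using obtain_block_subsequence[of g] g(3) finite_supp[OF g(1)] by blast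
  obtain C where C: "C \<ge> 0" "\<forall>x\<in>c00. \<bar>f x\<bar> \<le> C * normM M x" using dual_bound[OF f] by blast
  obtain k where k: "C / \<epsilon> < (3/2::real)^k" using real_arch_pow[of "3/2" "C / \<epsilon>"] by auto
  let ?X = "\<lambda>n. \<Sum>j\<in>{0..<0+3^k}. g (lo j) n"
  have X: "normM M ?X \<le> 2^k" "3^k * \<epsilon> \<le> f ?X"
    using triadic_block_sums[OF M3 f e strict_mono_mono[OF lo(1)], of "\<lambda>j. g (lo j)" 0 k] g lo(2)
    by (auto simp: less_imp_le)
  have "?X \<in> c00" using g(1) by (intro c00_sum) auto
  then have "f ?X \<le> C * normM M ?X" using C(2) by fastforce
  also have "\<dots> \<le> C * 2^k" using X(1) C(1) by (rule mult_left_mono)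
  finally have "(3/2::real)^k * \<epsilon> \<le> C"
    using X(2) by (simp add: field_simps)
  then show False using k e by (simp add: pos_divide_less_eq)
qed

lemma sum_unitvec: "(\<Sum>i\<in>I. x i * unitvec i n) = (if n \<in> I then x n else 0)" if "finite I"
  using that by (simp add: unitvec_def indicator_def if_distrib[of "(*) _"] eq_commute cong: if_cong)

lemma restr_atLeast_plus_initial: "restr {N..} x n + (\<Sum>i<N. x i * unitvec i n) = x n"
  by (simp add: sum_unitvec restr_def)

lemma dual_tail_decomposition:
  assumes f: "f \<in> dual_space M" and x: "x \<in> c00"
  shows "f x = f (restr {N..} x) + (\<Sum>i<N. f (unitvec i) * x i)"
proof -
  have c00: "(\<lambda>n. x i * unitvec i n) \<in> c00" for i by (rule c00_scale[OF unitvec_in_c00])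
  have "f x = f (\<lambda>n. restr {N..} x n + (\<Sum>i<N. x i * unitvec i n))"
    by (simp add: restr_atLeast_plus_initial)
  also have "\<dots> = f (restr {N..} x) + f (\<lambda>n. \<Sum>i<N. x i * unitvec i n)"
    using c00 by (intro dual_add[OF f restr_in_c00[OF x] c00_sum]) auto
  also have "f (\<lambda>n. \<Sum>i<N. x i * unitvec i n) = (\<Sum>i<N. f (unitvec i) * x i)"
    using c00 dual_sum[OF f, of "{..<N}"] dual_scale[OF f unitvec_in_c00] by (simp add: mult.commute)
  finally show ?thesis .
qed

theorem shrinking_basis_if_three_sets:
  assumes M3: "\<forall>A :: nat set. card A = 3 \<longrightarrow> A \<in> M"
  shows "shrinking_basis M"
  unfolding shrinking_basis_def
proof
  have "proj N x = restr {..<N} x" for N x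
    unfolding proj_def restr_def by auto
  then show "is_basis M"
    unfolding is_basis_def using normM_restr by (intro exI[of _ 1]) simp
  show "shrinking M"
    unfolding shrinking_def
  proof (intro ballI allI impI)
    fix f and \<epsilon> :: real
    assume f: "f \<in> dual_space M" and e: "\<epsilon> > 0"
    obtain N where N: "\<forall>x\<in>c00. normM M x \<le> 1 \<longrightarrow> \<bar>f (restr {N..} x)\<bar> \<le> \<epsilon>/2"
      using tail_functional_small[OF M3 f, of "\<epsilon>/2"] e by auto
    have "dual_norm M (\<lambda>x. if x \<in> c00 then f x - (\<Sum>i<N. f (unitvec i) * x i) else 0) \<le> \<epsilon>/2"
    proof (rule dual_norm_least)
      fix x
      assume "x \<in> c00" "normM M x \<le> 1"
      then show "\<bar>if x \<in> c00 then f x - (\<Sum>i<N. f (unitvec i) * x i) else 0\<bar> \<le> \<epsilon>/2"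
        using dual_tail_decomposition[OF f, of x N] N by auto
    qed
    then show "\<exists>N c. dual_norm M (\<lambda>x. if x \<in> c00 then f x - (\<Sum>i<N. c i * x i) else 0) < \<epsilon>"
      using e by (intro exI[of _ N] exI[of _ "\<lambda>i. f (unitvec i)"]) simp
  qed
qed

subsection \<open>Averages that are small on a family of sets\<close>

definition block_ranges :: "(nat \<Rightarrow> nat) \<Rightarrow> (nat \<Rightarrow> nat) \<Rightarrow> bool" where
  "block_ranges lo hi \<longleftrightarrow> (\<forall>i. lo i \<le> hi i \<and> hi i < lo (Suc i))"

definition blocks_meeting :: "(nat \<Rightarrow> nat) \<Rightarrow> (nat \<Rightarrow> nat) \<Rightarrow> nat set \<Rightarrow> nat set" where
  "blocks_meeting lo hi A = {i. \<exists>x\<in>A. lo i \<le> x \<and> x \<le> hi i}"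

definition prob_weights :: "(nat \<Rightarrow> real) \<Rightarrow> nat set \<Rightarrow> nat \<Rightarrow> bool" where
  "prob_weights a D m \<longleftrightarrow> finite D \<and> D \<noteq> {} \<and> D \<subseteq> {m..} \<and> (\<forall>i\<in>D. 0 \<le> a i) \<and> sum a D = 1"

text \<open>For every \<open>\<epsilon>\<close> and every partition of \<open>\<nat>\<close> into successive intervals \<open>[lo i, hi i]\<close>,
  arbitrarily late averages give every set of the family mass below \<open>\<epsilon>\<close> on the intervals it
  meets.  For the families of finite sets considered below this is the combinatorial content of
  "every block sequence has a convex block sequence that is small in \<open>\<ell>\<^sub>1\<close>-norm on \<open>\<F>\<close>".\<close>
definition small_averages :: "nat set set \<Rightarrow> bool" where
  "small_averages F \<longleftrightarrow> (\<forall>\<epsilon>>0. \<forall>lo hi. block_ranges lo hi \<longrightarrow>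
      (\<forall>m. \<exists>a D. prob_weights a D m \<and> (\<forall>A\<in>F. sum a (D \<inter> blocks_meeting lo hi A) < \<epsilon>)))"

lemma block_ranges_less:
  assumes "block_ranges lo hi" "i < j"
  shows "hi i < lo j"
  using assms(2)
proof (induction j)
  case (Suc j)
  have "lo j \<le> hi j" "hi j < lo (Suc j)" using assms(1) unfolding block_ranges_def by auto
  then show ?case using Suc by (cases "i = j") auto
qed simp

lemma block_ranges_mono:
  assumes "block_ranges lo hi" "i \<le> j"
  shows "lo i \<le> lo j" "hi i \<le> hi j" "lo i \<le> hi j"
proof -
  have "lo k \<le> hi k" for k using assms(1) unfolding block_ranges_def by auto
  moreover have "i = j \<or> hi i < lo j"
    using block_ranges_less[OF assms(1), of i j] assms(2) by (cases "i < j") auto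
  ultimately show "lo i \<le> lo j" "hi i \<le> hi j" "lo i \<le> hi j"
    using le_trans[of "lo i" "hi i"] le_trans[of _ "lo j" "hi j"] by (auto simp: less_imp_le)
qed

lemma prob_weights_singleton: "prob_weights (\<lambda>_. 1) {m} m"
  unfolding prob_weights_def by auto

lemma prob_weights_sum_le_1: "prob_weights a D m \<Longrightarrow> sum a (D \<inter> X) \<le> 1"
  unfolding prob_weights_def using sum_mono2[of D "D \<inter> X" a] by auto

lemma prob_weights_average_less:
  assumes "prob_weights b E m" "\<And>j. j \<in> E \<Longrightarrow> x j < \<epsilon>"
  shows "(\<Sum>j\<in>E. b j * x j) < \<epsilon>"
proof -
  have E: "finite E" "\<And>j. j \<in> E \<Longrightarrow> 0 \<le> b j" "sum b E = 1"
    using assms(1) unfolding prob_weights_def by auto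
  have "\<exists>j\<in>E. b j > 0"
  proof (rule ccontr)
    assume "\<not> (\<exists>j\<in>E. b j > 0)"
    then have "sum b E = 0" using E(2) by (intro sum.neutral) (simp add: not_less order.antisym)
    then show False using E(3) by simp
  qed
  then obtain j0 where "j0 \<in> E" "b j0 > 0" by blast
  moreover have "b j * x j \<le> b j * \<epsilon>" if "j \<in> E" for j
    using E(2)[OF that] assms(2)[OF that] by (simp add: mult_left_mono)
  ultimately have "(\<Sum>j\<in>E. b j * x j) < (\<Sum>j\<in>E. b j * \<epsilon>)"
    using E(1) assms(2) by (intro sum_strict_mono_ex1) (auto intro!: bexI[of _ j0])
  also have "\<dots> = \<epsilon>" using E(3) by (simp flip: sum_distrib_right)
  finally show ?thesis .
qed

definition compose_weights ::
  "(nat \<Rightarrow> real) \<Rightarrow> nat set \<Rightarrow> (nat \<Rightarrow> nat \<Rightarrow> real) \<Rightarrow> (nat \<Rightarrow> nat set) \<Rightarrow> nat \<Rightarrow> real" where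
  "compose_weights b E A Ds = (\<lambda>i. \<Sum>j\<in>E. b j * (if i \<in> Ds j then A j i else 0))"

lemma sum_compose_weights:
  assumes "finite E" "\<And>j. j \<in> E \<Longrightarrow> finite (Ds j)"
  shows "sum (compose_weights b E A Ds) ((\<Union>j\<in>E. Ds j) \<inter> X) = (\<Sum>j\<in>E. b j * sum (A j) (Ds j \<inter> X))"
proof -
  let ?U = "(\<Union>j\<in>E. Ds j) \<inter> X"
  have "sum (compose_weights b E A Ds) ?U = (\<Sum>j\<in>E. b j * (\<Sum>i\<in>?U. if i \<in> Ds j then A j i else 0))"
    unfolding compose_weights_def by (subst sum.swap) (simp add: sum_distrib_left)
  also have "\<dots> = (\<Sum>j\<in>E. b j * sum (A j) (Ds j \<inter> X))"
    using assms by (intro sum.cong refl) (auto simp: sum.inter_restrict[symmetric] intro!: sum.cong)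
  finally show ?thesis .
qed

lemma prob_weights_compose:
  assumes b: "prob_weights b E m'" and A: "\<And>j. j \<in> E \<Longrightarrow> prob_weights (A j) (Ds j) (ms j)"
    and ms: "\<And>j. j \<in> E \<Longrightarrow> m \<le> ms j"
  shows "prob_weights (compose_weights b E A Ds) (\<Union>j\<in>E. Ds j) m"
proof -
  have fin: "finite E" "\<And>j. j \<in> E \<Longrightarrow> finite (Ds j)"
    using b A unfolding prob_weights_def by auto
  have "sum (compose_weights b E A Ds) (\<Union>j\<in>E. Ds j) = (\<Sum>j\<in>E. b j * sum (A j) (Ds j \<inter> UNIV))"
    using sum_compose_weights[OF fin, where X = UNIV] by simp
  also have "\<dots> = 1" using A b unfolding prob_weights_def by simp
  moreover have "0 \<le> compose_weights b E A Ds i" if "i \<in> (\<Union>j\<in>E. Ds j)" for i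
    using b A unfolding compose_weights_def prob_weights_def by (auto intro!: sum_nonneg)
  moreover have "(\<Union>j\<in>E. Ds j) \<noteq> {}" "(\<Union>j\<in>E. Ds j) \<subseteq> {m..}"
    using b A ms unfolding prob_weights_def by fastforce+
  ultimately show ?thesis
    using fin unfolding prob_weights_def by auto
qed

lemma obtain_successive_weights:
  assumes "\<And>m. \<exists>a D. prob_weights a D m \<and> Q m a D"
  obtains A Ds ms where "ms 0 = m" "\<And>j. prob_weights (A j) (Ds j) (ms j)"
    "\<And>j. Q (ms j) (A j) (Ds j)" "\<And>j. ms (Suc j) = Max (Ds j) + 1"
proof -
  have "\<forall>m. \<exists>aD. prob_weights (fst aD) (snd aD) m \<and> Q m (fst aD) (snd aD)"
    using assms by simp
  from choice[OF this] obtain aD where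
    aD: "\<And>m. prob_weights (fst (aD m)) (snd (aD m)) m \<and> Q m (fst (aD m)) (snd (aD m))"
    by blast
  define ms where "ms = rec_nat m (\<lambda>j mj. Max (snd (aD mj)) + 1)"
  have "ms 0 = m" "\<And>j. ms (Suc j) = Max (snd (aD (ms j))) + 1" unfolding ms_def by simp_all
  then show ?thesis using that[of ms "\<lambda>j. fst (aD (ms j))" "\<lambda>j. snd (aD (ms j))"] aD by blast
qed

lemma successive_weights:
  assumes w: "\<And>j. prob_weights (A j) (Ds j) (ms j)" and ms: "\<And>j. ms (Suc j) = Max (Ds j) + 1"
  shows successive_weights_mono: "\<And>i j. i \<le> j \<Longrightarrow> ms i \<le> ms j"
    and successive_weights_less: "\<And>j j' x y. j < j' \<Longrightarrow> x \<in> Ds j \<Longrightarrow> y \<in> Ds j' \<Longrightarrow> x < y"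
    and successive_weights_Max_Min: "\<And>j. Max (Ds j) < Min (Ds (Suc j))"
    and successive_weights_Min_Max: "\<And>j. Min (Ds j) \<le> Max (Ds j)"
proof -
  have D: "finite (Ds j)" "Ds j \<noteq> {}" "Ds j \<subseteq> {ms j..}" for j
    using w[of j] unfolding prob_weights_def by auto
  have "ms j \<le> ms (Suc j)" for j
  proof -
    obtain x where "x \<in> Ds j" using D(2) by blast
    then have "ms j \<le> x" "x \<le> Max (Ds j)" using D(1,3) by auto
    then have "ms j \<le> Max (Ds j)" by linarith
    then show ?thesis using ms[of j] by simp
  qed
  then show mono: "\<And>i j. i \<le> j \<Longrightarrow> ms i \<le> ms j" by (rule lift_Suc_mono_le)
  show "x < y" if "j < j'" "x \<in> Ds j" "y \<in> Ds j'" for j j' x y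
  proof -
    have "x \<le> Max (Ds j)" "ms (Suc j) \<le> ms j'" "ms j' \<le> y"
      using that D mono by auto
    then show ?thesis using ms[of j] by simp
  qed
  show "Max (Ds j) < Min (Ds (Suc j))" for j
    using D[of "Suc j"] ms[of j] by (auto simp: subset_eq Suc_le_eq)
  show "Min (Ds j) \<le> Max (Ds j)" for j
    using D by simp
qed

lemma block_ranges_grouped:
  assumes "block_ranges lo hi" "\<And>j. Max (Ds j) < Min (Ds (Suc j))" "\<And>j. Min (Ds j) \<le> Max (Ds j)"
  shows "block_ranges (\<lambda>j. lo (Min (Ds j))) (\<lambda>j. hi (Max (Ds j)))"
  unfolding block_ranges_def using block_ranges_mono(3)[OF assms(1,3)] block_ranges_less[OF assms(1,2)]
  by auto

lemma blocks_meeting_grouped: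
  assumes "block_ranges lo hi" "finite (Ds j)" "i \<in> Ds j" "i \<in> blocks_meeting lo hi A"
  shows "j \<in> blocks_meeting (\<lambda>j. lo (Min (Ds j))) (\<lambda>j. hi (Max (Ds j))) A"
proof -
  have "lo (Min (Ds j)) \<le> lo i" "hi i \<le> hi (Max (Ds j))"
    using assms(2,3) block_ranges_mono[OF assms(1)] by auto
  moreover obtain x where "x \<in> A" "lo i \<le> x" "x \<le> hi i"
    using assms(4) unfolding blocks_meeting_def by blast
  ultimately have "x \<in> A \<and> lo (Min (Ds j)) \<le> x \<and> x \<le> hi (Max (Ds j))" by linarith
  then show ?thesis unfolding blocks_meeting_def by blast
qed

lemma sum_compose_weights_le_grouped:
  assumes "block_ranges lo hi" "\<And>j. prob_weights (A j) (Ds j) (ms j)" "prob_weights b E m'"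
  shows "(\<Sum>j\<in>E. b j * sum (A j) (Ds j \<inter> blocks_meeting lo hi X))
    \<le> sum b (E \<inter> blocks_meeting (\<lambda>j. lo (Min (Ds j))) (\<lambda>j. hi (Max (Ds j))) X)"
proof -
  let ?G = "blocks_meeting (\<lambda>j. lo (Min (Ds j))) (\<lambda>j. hi (Max (Ds j))) X"
  have "b j * sum (A j) (Ds j \<inter> blocks_meeting lo hi X) \<le> (if j \<in> ?G then b j else 0)" if "j \<in> E" for j
  proof (cases "j \<in> ?G")
    case True
    then show ?thesis
      using assms(3) that prob_weights_sum_le_1[OF assms(2)] unfolding prob_weights_def
      by (simp add: mult_left_le)
  next
    case False
    then have "Ds j \<inter> blocks_meeting lo hi X = {}"
      using blocks_meeting_grouped[OF assms(1)] assms(2)[of j] unfolding prob_weights_def by blast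
    then show ?thesis using False by simp
  qed
  then have "(\<Sum>j\<in>E. b j * sum (A j) (Ds j \<inter> blocks_meeting lo hi X)) \<le> (\<Sum>j\<in>E. if j \<in> ?G then b j else 0)"
    by (rule sum_mono)
  also have "\<dots> = sum b (E \<inter> ?G)"
    using assms(3) unfolding prob_weights_def by (simp add: sum.inter_restrict)
  finally show ?thesis .
qed

lemma small_averages_Un:
  assumes F1: "small_averages F1" and F2: "small_averages F2"
  shows "small_averages (F1 \<union> F2)"
  unfolding small_averages_def
proof (intro allI impI)
  fix \<epsilon> :: real and lo hi m
  assume e: "\<epsilon> > 0" and v: "block_ranges lo hi"
  have "\<exists>a D. prob_weights a D m' \<and> (\<forall>B\<in>F1. sum a (D \<inter> blocks_meeting lo hi B) < \<epsilon>)" for m'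
    using F1 e v unfolding small_averages_def by blast
  then obtain A Ds ms where w: "ms 0 = m" "\<And>j. prob_weights (A j) (Ds j) (ms j)"
      "\<And>j. \<forall>B\<in>F1. sum (A j) (Ds j \<inter> blocks_meeting lo hi B) < \<epsilon>" "\<And>j. ms (Suc j) = Max (Ds j) + 1"
    by (rule obtain_successive_weights[where m = m]) blast
  let ?lo = "\<lambda>j. lo (Min (Ds j))" and ?hi = "\<lambda>j. hi (Max (Ds j))"
  have "block_ranges ?lo ?hi"
    by (rule block_ranges_grouped[of lo hi Ds, OF v successive_weights_Max_Min[of A Ds ms, OF w(2,4)]
          successive_weights_Min_Max[of A Ds ms, OF w(2,4)]])
  then obtain b E where bE: "prob_weights b E 0" "\<forall>B\<in>F2. sum b (E \<inter> blocks_meeting ?lo ?hi B) < \<epsilon>"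
    using F2 e unfolding small_averages_def by blast
  have fin: "finite E" "\<And>j. finite (Ds j)" using bE w(2) unfolding prob_weights_def by auto
  show "\<exists>a D. prob_weights a D m \<and> (\<forall>B\<in>F1 \<union> F2. sum a (D \<inter> blocks_meeting lo hi B) < \<epsilon>)"
  proof (intro exI conjI ballI)
    show "prob_weights (compose_weights b E A Ds) (\<Union>j\<in>E. Ds j) m"
      using w successive_weights_mono[of A Ds ms, OF w(2,4), of 0] by (intro prob_weights_compose[OF bE(1)]) auto
    fix B
    assume "B \<in> F1 \<union> F2"
    then consider "B \<in> F1" | "B \<in> F2" by blast
    then have "(\<Sum>j\<in>E. b j * sum (A j) (Ds j \<inter> blocks_meeting lo hi B)) < \<epsilon>"
    proof cases
      case 1
      then show ?thesis using w(3) by (intro prob_weights_average_less[OF bE(1)]) auto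
    next
      case 2
      then show ?thesis
        using sum_compose_weights_le_grouped[of lo hi A Ds ms b E 0 B, OF v w(2) bE(1)] bE(2) by fastforce
    qed
    then show "sum (compose_weights b E A Ds) ((\<Union>j\<in>E. Ds j) \<inter> blocks_meeting lo hi B) < \<epsilon>"
      using sum_compose_weights[OF fin] by simp
  qed
qed

lemma small_averages_empty: "small_averages {}"
  unfolding small_averages_def using prob_weights_singleton by blast

lemma small_averages_UN:
  "finite I \<Longrightarrow> (\<And>i. i \<in> I \<Longrightarrow> small_averages (F i)) \<Longrightarrow> small_averages (\<Union>i\<in>I. F i)"
  by (induction I rule: finite_induct) (auto simp: small_averages_empty small_averages_Un)

subsection \<open>Compact families of finite sets have small averages\<close>

definition down_closure :: "nat set set \<Rightarrow> nat set set" where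
  "down_closure M = {B. \<exists>F\<in>M. B \<subseteq> F}"

definition extensions :: "nat set set \<Rightarrow> nat set \<Rightarrow> nat set set" where
  "extensions M B = {A. B \<union> A \<in> down_closure M \<and> (\<forall>b\<in>B. \<forall>x\<in>A. b < x)}"

definition extension_rel :: "nat set set \<Rightarrow> (nat set \<times> nat set) set" where
  "extension_rel M = {(insert n B, B) | n B. insert n B \<in> down_closure M \<and> (\<forall>b\<in>B. b < n)}"

lemma down_closure_subset: "A \<in> down_closure M \<Longrightarrow> B \<subseteq> A \<Longrightarrow> B \<in> down_closure M"
  unfolding down_closure_def by blast

lemma extensions_remove_Min:
  assumes X: "X \<in> extensions M B" "finite X" "X \<noteq> {}"
  shows "insert (Min X) B \<in> down_closure M" "\<forall>b\<in>B. b < Min X"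
    and "X - {Min X} \<in> extensions M (insert (Min X) B)"
proof -
  have BX: "B \<union> X \<in> down_closure M" "\<forall>b\<in>B. \<forall>x\<in>X. b < x"
    using X(1) unfolding extensions_def by auto
  have Min: "Min X \<in> X" "\<forall>x\<in>X. Min X \<le> x" using X(2,3) by auto
  show "insert (Min X) B \<in> down_closure M"
    using down_closure_subset[OF BX(1)] Min(1) by blast
  show "\<forall>b\<in>B. b < Min X" using BX(2) Min(1) by blast
  have "insert (Min X) B \<union> (X - {Min X}) = B \<union> X" using Min(1) by blast
  then show "X - {Min X} \<in> extensions M (insert (Min X) B)"
    unfolding extensions_def using BX Min(2) by fastforce
qed

lemma Int_blocks_meeting_empty:
  "(\<And>i x. i \<in> D \<Longrightarrow> x \<in> X \<Longrightarrow> hi i < x) \<Longrightarrow> D \<inter> blocks_meeting lo hi X = {}"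
  unfolding blocks_meeting_def by fastforce

lemma Int_blocks_meeting_Diff:
  "(\<And>i. i \<in> D \<Longrightarrow> n < lo i) \<Longrightarrow> D \<inter> blocks_meeting lo hi (X - {n}) = D \<inter> blocks_meeting lo hi X"
  unfolding blocks_meeting_def by fastforce

text \<open>The heart of the induction on the tree of \<open>M\<close>: for \<open>X\<close> extending \<open>B\<close>, the first group
  of blocks reaching \<open>Min X\<close> may carry much of \<open>X\<close>; later groups only see \<open>X - {Min X}\<close>,
  an extension of a one-point-longer set.\<close>
lemma extension_small_but_one_group:
  assumes fin: "\<forall>F\<in>M. finite F" and v: "block_ranges lo hi" and "\<delta> > 0"
    and w: "\<And>t. prob_weights (A t) (Ds t) (ms t)" "\<And>t. ms (Suc t) = Max (Ds t) + 1"
    and small: "\<And>t n Y. n \<le> hi (ms t - 1) \<Longrightarrow> \<forall>b\<in>B. b < n \<Longrightarrow> insert n B \<in> down_closure M \<Longrightarrow>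
      Y \<in> extensions M (insert n B) \<Longrightarrow> sum (A t) (Ds t \<inter> blocks_meeting lo hi Y) < \<delta>"
    and X: "X \<in> extensions M B"
  shows "\<exists>t0. \<forall>t. t \<noteq> t0 \<longrightarrow> sum (A t) (Ds t \<inter> blocks_meeting lo hi X) < \<delta>"
proof (cases "X = {}")
  case True
  then show ?thesis using \<open>\<delta> > 0\<close> by (simp add: blocks_meeting_def)
next
  case False
  obtain F where "F \<in> M" "B \<union> X \<subseteq> F"
    using X unfolding extensions_def down_closure_def by blast
  then have "finite X" using fin by (auto intro: finite_subset)
  define n where "n = Min X"
  define P where "P t = hi (Max (Ds t))" for t
  have D: "finite (Ds t)" "Ds t \<noteq> {}" for t using w(1) unfolding prob_weights_def by auto
  have "Max (Ds t) \<le> Max (Ds (Suc t))" for t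
    using successive_weights_Max_Min[of A Ds ms, OF w, of t] successive_weights_Min_Max[of A Ds ms, OF w, of "Suc t"] by linarith
  then have "mono (\<lambda>t. Max (Ds t))" by (simp add: mono_iff_le_Suc)
  then have P_mono: "mono P" unfolding P_def using block_ranges_mono(2)[OF v] by (simp add: mono_def)
  define t0 where "t0 = (LEAST t. n \<le> P t)"
  have "sum (A t) (Ds t \<inter> blocks_meeting lo hi X) < \<delta>" if "t \<noteq> t0" for t
  proof (cases "n \<le> P t")
    case False
    have "hi i < x" if "i \<in> Ds t" "x \<in> X" for i x
    proof -
      have "hi i \<le> P t" unfolding P_def using D(1) that(1) by (intro block_ranges_mono(2)[OF v]) simp
      moreover have "n \<le> x" unfolding n_def using \<open>finite X\<close> that(2) by simp
      ultimately show ?thesis using False by linarith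
    qed
    then show ?thesis using \<open>\<delta> > 0\<close> by (simp add: Int_blocks_meeting_empty)
  next
    case True
    then have "t0 < t" using \<open>t \<noteq> t0\<close> Least_le[of "\<lambda>t. n \<le> P t"] unfolding t0_def by fastforce
    then obtain t' where t': "t = Suc t'" "t0 \<le> t'" by (cases t) auto
    have "n \<le> P t0" unfolding t0_def by (rule LeastI[of "\<lambda>t. n \<le> P t", OF True])
    then have "n \<le> P t'" using monoD[OF P_mono t'(2)] by linarith
    moreover have "n < lo i" if "i \<in> Ds t" for i
    proof -
      have "Max (Ds t') < i"
        using successive_weights_less[of A Ds ms, OF w, of t' t "Max (Ds t')" i] D[of t'] that t'(1) by simp
      then have "P t' < lo i" unfolding P_def by (rule block_ranges_less[OF v])
      then show ?thesis using \<open>n \<le> P t'\<close> by linarith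
    qed
    ultimately show ?thesis
      using small[of n t "X - {n}"] extensions_remove_Min[OF X \<open>finite X\<close> False] w(2)[of t']
      unfolding n_def P_def t'(1) by (simp add: Int_blocks_meeting_Diff)
  qed
  then show ?thesis by blast
qed

lemma uniform_average_but_one:
  assumes "K > 0" "\<delta> \<ge> 0" "\<And>t. t < K \<Longrightarrow> w t \<le> 1" "\<And>t. t < K \<Longrightarrow> t \<noteq> t0 \<Longrightarrow> w t < \<delta>"
  shows "(\<Sum>t<K. (1 / real K) * w t) \<le> \<delta> + 1 / real K"
proof -
  have "w t \<le> \<delta> + (if t = t0 then 1 else 0)" if "t < K" for t
    using assms(2) assms(3,4)[OF that] by (cases "t = t0") auto
  then have "(\<Sum>t<K. w t) \<le> (\<Sum>t<K. \<delta> + (if t = t0 then 1 else 0))" by (intro sum_mono) auto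
  also have "\<dots> \<le> real K * \<delta> + 1" by (simp add: sum.distrib)
  finally have "(\<Sum>t<K. w t) / real K \<le> (real K * \<delta> + 1) / real K"
    using assms(1) by (simp add: divide_right_mono)
  then show ?thesis using assms(1) by (simp add: sum_divide_distrib[symmetric] add_divide_distrib)
qed

lemma small_averages_extensions_step:
  assumes fin: "\<forall>F\<in>M. finite F"
    and IH: "\<And>n. insert n B \<in> down_closure M \<Longrightarrow> \<forall>b\<in>B. b < n \<Longrightarrow> small_averages (extensions M (insert n B))"
  shows "small_averages (extensions M B)"
  unfolding small_averages_def
proof (intro allI impI)
  fix \<epsilon> :: real and lo hi m
  assume e: "\<epsilon> > 0" and v: "block_ranges lo hi"
  obtain n where n: "inverse (real (Suc n)) < \<epsilon> / 2" using reals_Archimedean[of "\<epsilon>/2"] e by auto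
  define K where "K = Suc n"
  have K: "K > 0" "1 / real K < \<epsilon> / 2" using n unfolding K_def by (auto simp: inverse_eq_divide)
  define Fam where "Fam k = (\<Union>n\<in>{n. n \<le> hi (k - 1) \<and> (\<forall>b\<in>B. b < n) \<and> insert n B \<in> down_closure M}.
    extensions M (insert n B))" for k
  have "small_averages (Fam k)" for k
    unfolding Fam_def using IH by (intro small_averages_UN) auto
  then have "\<exists>a D. prob_weights a D k \<and> (\<forall>Y\<in>Fam k. sum a (D \<inter> blocks_meeting lo hi Y) < \<epsilon>/2)" for k
    using e v unfolding small_averages_def by (meson half_gt_zero)
  then obtain A Ds ms where w: "ms 0 = m" "\<And>t. prob_weights (A t) (Ds t) (ms t)"
      "\<And>t. \<forall>Y\<in>Fam (ms t). sum (A t) (Ds t \<inter> blocks_meeting lo hi Y) < \<epsilon>/2"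
      "\<And>t. ms (Suc t) = Max (Ds t) + 1"
    by (rule obtain_successive_weights[where m = m]) blast
  define b where "b = (\<lambda>_::nat. 1 / real K)"
  have b: "prob_weights b {..<K} 0" unfolding prob_weights_def b_def using K by auto
  have fin_Ds: "finite (Ds t)" for t using w(2) unfolding prob_weights_def by auto
  show "\<exists>a D. prob_weights a D m \<and> (\<forall>X\<in>extensions M B. sum a (D \<inter> blocks_meeting lo hi X) < \<epsilon>)"
  proof (intro exI conjI ballI)
    show "prob_weights (compose_weights b {..<K} A Ds) (\<Union>t\<in>{..<K}. Ds t) m"
      using w successive_weights_mono[of A Ds ms, OF w(2,4), of 0] by (intro prob_weights_compose[OF b]) auto
    fix X
    assume X: "X \<in> extensions M B"
    have small: "sum (A t) (Ds t \<inter> blocks_meeting lo hi Y) < \<epsilon>/2"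
      if "n \<le> hi (ms t - 1)" "\<forall>b\<in>B. b < n" "insert n B \<in> down_closure M" "Y \<in> extensions M (insert n B)"
      for t n Y
      using w(3)[of t] that unfolding Fam_def by blast
    have "\<exists>t0. \<forall>t. t \<noteq> t0 \<longrightarrow> sum (A t) (Ds t \<inter> blocks_meeting lo hi X) < \<epsilon>/2"
      by (rule extension_small_but_one_group[where M = M and B = B and X = X and \<delta> = "\<epsilon>/2"
            and lo = lo and hi = hi and A = A and Ds = Ds and ms = ms, OF fin v half_gt_zero[OF e] w(2,4) small X])
    then obtain t0 where t0: "\<And>t. t \<noteq> t0 \<Longrightarrow> sum (A t) (Ds t \<inter> blocks_meeting lo hi X) < \<epsilon>/2"
      by blast
    have "(\<Sum>t<K. b t * sum (A t) (Ds t \<inter> blocks_meeting lo hi X)) \<le> \<epsilon>/2 + 1 / real K"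
      unfolding b_def using K e t0 prob_weights_sum_le_1[OF w(2)] by (intro uniform_average_but_one) auto
    then show "sum (compose_weights b {..<K} A Ds) ((\<Union>t\<in>{..<K}. Ds t) \<inter> blocks_meeting lo hi X) < \<epsilon>"
      using sum_compose_weights[of "{..<K}" Ds b A] fin_Ds K(2) by simp
  qed
qed

lemma finite_subset_outside_down_closure:
  assumes cpt: "compact ((\<lambda>A. indicator A :: nat \<Rightarrow> real) ` M)" and fin: "\<forall>A\<in>M. finite A"
    and U: "infinite U"
  obtains S where "S \<subseteq> U" "finite S" "S \<notin> down_closure M"
proof -
  have "\<forall>F\<in>M. \<exists>p. p \<in> U \<and> p \<notin> F"
    using U fin finite_subset[of U] by blast
  from bchoice[OF this] obtain p where p: "\<And>F. F \<in> M \<Longrightarrow> p F \<in> U \<and> p F \<notin> F" by blast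
  let ?O = "\<lambda>F. {h :: nat \<Rightarrow> real. h (p F) < 1/2}"
  have "open (?O F)" for F
    by (rule open_Collect_less) (auto intro: continuous_on_product_coordinates)
  moreover have "(\<lambda>A. indicator A :: nat \<Rightarrow> real) ` M \<subseteq> (\<Union>F\<in>M. ?O F)"
    using p by force
  ultimately obtain C where C: "C \<subseteq> M" "finite C" "(\<lambda>A. indicator A :: nat \<Rightarrow> real) ` M \<subseteq> (\<Union>F\<in>C. ?O F)"
    by (rule compactE_image[OF cpt])
  show ?thesis
  proof
    show "p ` C \<subseteq> U" "finite (p ` C)" using p C(1,2) by auto
    show "p ` C \<notin> down_closure M"
    proof
      assume "p ` C \<in> down_closure M"
      then obtain G where G: "G \<in> M" "p ` C \<subseteq> G" unfolding down_closure_def by blast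
      then obtain F where "F \<in> C" "indicator G (p F) < (1/2::real)" using C(3) by blast
      then show False using G(2) by (auto simp: indicator_def split: if_splits)
    qed
  qed
qed

lemma extension_rel_iff:
  "(C, B) \<in> extension_rel M \<longleftrightarrow> (\<exists>n. C = insert n B \<and> insert n B \<in> down_closure M \<and> (\<forall>b\<in>B. b < n))"
  unfolding extension_rel_def by blast

lemma wf_extension_rel:
  assumes cpt: "compact ((\<lambda>A. indicator A :: nat \<Rightarrow> real) ` M)" and fin: "\<forall>A\<in>M. finite A"
  shows "wf (extension_rel M)"
  unfolding wf_iff_no_infinite_down_chain
proof
  assume "\<exists>f. \<forall>i. (f (Suc i), f i) \<in> extension_rel M"
  then obtain f where "\<forall>i. (f (Suc i), f i) \<in> extension_rel M" by blast
  then have "\<forall>i. \<exists>n. f (Suc i) = insert n (f i) \<and> insert n (f i) \<in> down_closure M \<and> (\<forall>b\<in>f i. b < n)"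
    by (simp add: extension_rel_iff)
  from choice[OF this] obtain new where new: "\<And>i. f (Suc i) = insert (new i) (f i)"
      "\<And>i. f (Suc i) \<in> down_closure M" "\<And>i. \<forall>b\<in>f i. b < new i"
    by auto
  have f_mono: "mono f" using new(1) by (intro mono_iff_le_Suc[THEN iffD2]) blast
  have "strict_mono new" using new by (intro strict_monoI_Suc) auto
  then have "infinite (range new)" using strict_mono_imp_inj_on range_inj_infinite by blast
  moreover have "range new \<subseteq> (\<Union>i. f i)" using new(1) by blast
  ultimately have "infinite (\<Union>i. f i)" using infinite_super by blast
  then obtain S where S: "S \<subseteq> (\<Union>i. f i)" "finite S" "S \<notin> down_closure M"
    by (rule finite_subset_outside_down_closure[OF cpt fin])
  have "\<forall>s\<in>S. \<exists>i. s \<in> f i" using S(1) by blast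
  from bchoice[OF this] obtain I where I: "\<And>s. s \<in> S \<Longrightarrow> s \<in> f (I s)" by blast
  have "f (I s) \<subseteq> f (Suc (Max (I ` S)))" if "s \<in> S" for s
    using S(2) that by (intro monoD[OF f_mono]) (simp add: le_SucI)
  then have "S \<subseteq> f (Suc (Max (I ` S)))" using I by blast
  then have "S \<in> down_closure M" using new(2) by (rule down_closure_subset[rotated])
  then show False using S(3) by blast
qed

lemma small_averages_down_closure:
  assumes cpt: "compact ((\<lambda>A. indicator A :: nat \<Rightarrow> real) ` M)" and fin: "\<forall>A\<in>M. finite A"
  shows "small_averages (down_closure M)"
proof -
  have "small_averages (extensions M B)" for B
    using wf_extension_rel[OF cpt fin]
  proof (induction B rule: wf_induct_rule)
    case (less B)
    have "small_averages (extensions M (insert n B))"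
      if "insert n B \<in> down_closure M" "\<forall>b\<in>B. b < n" for n
      using less[of "insert n B"] that by (auto simp: extension_rel_iff)
    then show ?case by (rule small_averages_extensions_step[OF fin])
  qed
  moreover have "extensions M {} = down_closure M" unfolding extensions_def by simp
  ultimately show ?thesis by metis
qed

definition pairing :: "(nat \<Rightarrow> real) \<Rightarrow> (nat \<Rightarrow> real) \<Rightarrow> real" where
  "pairing x y = (\<Sum>i\<in>supp x \<inter> supp y. x i * y i)"

definition pairing_bounded :: "nat set set \<Rightarrow> (nat \<Rightarrow> real) \<Rightarrow> real \<Rightarrow> bool" where
  "pairing_bounded M h r \<longleftrightarrow> (\<forall>\<theta>\<in>Theta M. \<bar>pairing \<theta> h\<bar> \<le> r)"

definition wsum :: "(nat \<Rightarrow> real) \<Rightarrow> nat set \<Rightarrow> (nat \<Rightarrow> nat \<Rightarrow> real) \<Rightarrow> nat \<Rightarrow> real" where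
  "wsum a D v = (\<lambda>n. \<Sum>i\<in>D. a i * v i n)"

lemma pairing_eq_sum: "finite A \<Longrightarrow> supp x \<inter> supp y \<subseteq> A \<Longrightarrow> pairing x y = (\<Sum>i\<in>A. x i * y i)"
  unfolding pairing_def by (rule sum.mono_neutral_left) (auto simp: supp_def)

lemma pairing_c00_right: "y \<in> c00 \<Longrightarrow> pairing x y = (\<Sum>i\<in>supp y. x i * y i)"
  by (rule pairing_eq_sum) (auto simp: finite_supp)

lemma pairing_commute: "pairing x y = pairing y x"
  unfolding pairing_def by (simp add: Int_commute mult.commute)

lemma pairing_c00_left: "x \<in> c00 \<Longrightarrow> pairing x y = (\<Sum>i\<in>supp x. x i * y i)"
  using pairing_c00_right[of x y] by (simp add: pairing_commute mult.commute)

lemma pairing_restr: "pairing (restr E x) y = pairing x (restr E y)"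
  unfolding pairing_def restr_def supp_def by (rule sum.cong) (auto simp: indicator_def)

lemma pairing_unitvec: "pairing (unitvec p) y = y p"
  by (subst pairing_eq_sum[of "{p}"]) (auto simp: supp_def unitvec_def indicator_def)

lemma pairing_disjoint: "supp x \<inter> supp y = {} \<Longrightarrow> pairing x y = 0"
  unfolding pairing_def by simp

lemma pairing_lincomb_left:
  assumes "x \<in> c00" "x' \<in> c00"
  shows "pairing (\<lambda>n. a * x n + b * x' n) y = a * pairing x y + b * pairing x' y"
proof -
  have fin: "finite (supp x \<union> supp x')" using assms by (simp add: finite_supp)
  have "pairing (\<lambda>n. a * x n + b * x' n) y = (\<Sum>i\<in>supp x \<union> supp x'. (a * x i + b * x' i) * y i)"
    by (rule pairing_eq_sum[OF fin]) (auto simp: supp_def)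
  moreover have "pairing x y = (\<Sum>i\<in>supp x \<union> supp x'. x i * y i)"
    by (rule pairing_eq_sum[OF fin]) auto
  moreover have "pairing x' y = (\<Sum>i\<in>supp x \<union> supp x'. x' i * y i)"
    by (rule pairing_eq_sum[OF fin]) auto
  ultimately show ?thesis by (simp add: sum.distrib sum_distrib_left algebra_simps)
qed

lemma pairing_scale_left: "pairing (\<lambda>n. c * x n) y = c * pairing x y"
  by (cases "c = 0") (simp_all add: pairing_def supp_def sum_distrib_left mult.assoc)

lemma pairing_sum_left:
  assumes "y \<in> c00"
  shows "pairing (\<lambda>n. c * (\<Sum>k\<in>K. x k n)) y = c * (\<Sum>k\<in>K. pairing (x k) y)"
proof -
  have "(\<Sum>i\<in>supp y. c * (\<Sum>k\<in>K. x k i) * y i) = c * (\<Sum>i\<in>supp y. \<Sum>k\<in>K. x k i * y i)"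
    by (simp add: sum_distrib_left sum_distrib_right mult.assoc)
  also have "\<dots> = c * (\<Sum>k\<in>K. \<Sum>i\<in>supp y. x k i * y i)"
    by (subst sum.swap) (rule refl)
  finally show ?thesis using assms by (simp add: pairing_c00_right)
qed

lemma pairing_wsum:
  assumes "\<theta> \<in> c00"
  shows "pairing \<theta> (wsum a D v) = (\<Sum>i\<in>D. a i * pairing \<theta> (v i))"
proof -
  have "(\<Sum>n\<in>supp \<theta>. \<theta> n * (\<Sum>i\<in>D. a i * v i n)) = (\<Sum>n\<in>supp \<theta>. \<Sum>i\<in>D. a i * (\<theta> n * v i n))"
    by (simp add: sum_distrib_left algebra_simps)
  also have "\<dots> = (\<Sum>i\<in>D. \<Sum>n\<in>supp \<theta>. a i * (\<theta> n * v i n))"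
    by (subst sum.swap) (rule refl)
  finally show ?thesis using assms by (simp add: pairing_c00_left wsum_def sum_distrib_left)
qed

lemma pairing_restr_supp:
  assumes "supp y \<subseteq> I"
  shows "pairing x y = pairing (restr I x) y"
proof -
  have "restr I y = y"
    using assms by (auto simp: restr_def supp_def fun_eq_iff indicator_def)
  then show ?thesis by (simp add: pairing_restr)
qed

lemma wsum_in_c00: "finite D \<Longrightarrow> (\<And>i. i \<in> D \<Longrightarrow> v i \<in> c00) \<Longrightarrow> wsum a D v \<in> c00"
  unfolding wsum_def by (intro c00_sum c00_scale)

lemma supp_wsum: "supp (wsum a D v) \<subseteq> (\<Union>i\<in>D. supp (v i))"
  unfolding wsum_def supp_def by (auto intro: ccontr simp: sum.neutral)

lemma wsum_compose_weights:
  assumes "finite E" "\<And>j. j \<in> E \<Longrightarrow> finite (Ds j)"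
  shows "wsum (compose_weights b E A Ds) (\<Union>j\<in>E. Ds j) v = wsum b E (\<lambda>j. wsum (A j) (Ds j) v)"
proof
  fix n
  let ?U = "\<Union>j\<in>E. Ds j"
  have "wsum (compose_weights b E A Ds) ?U v n = (\<Sum>i\<in>?U. \<Sum>j\<in>E. b j * (if i \<in> Ds j then A j i * v i n else 0))"
    unfolding wsum_def compose_weights_def by (auto simp: sum_distrib_right intro!: sum.cong)
  also have "\<dots> = (\<Sum>j\<in>E. b j * (\<Sum>i\<in>?U. if i \<in> Ds j then A j i * v i n else 0))"
    by (subst sum.swap) (simp add: sum_distrib_left)
  also have "\<dots> = (\<Sum>j\<in>E. b j * (\<Sum>i\<in>Ds j. A j i * v i n))"
  proof (rule sum.cong[OF refl])
    fix j
    assume "j \<in> E"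
    then have "?U \<inter> Ds j = Ds j" by blast
    then show "b j * (\<Sum>i\<in>?U. if i \<in> Ds j then A j i * v i n else 0) = b j * (\<Sum>i\<in>Ds j. A j i * v i n)"
      using assms by (simp add: sum.inter_restrict[symmetric])
  qed
  finally show "wsum (compose_weights b E A Ds) ?U v n = wsum b E (\<lambda>j. wsum (A j) (Ds j) v) n"
    unfolding wsum_def .
qed

lemma pairing_bounded_nonneg: "pairing_bounded M h r \<Longrightarrow> 0 \<le> r"
  unfolding pairing_bounded_def using Theta_zero[of M] by (metis abs_ge_zero order_trans)

lemma pairing_bounded_restr: "pairing_bounded M h r \<Longrightarrow> pairing_bounded M (restr E h) r"
  unfolding pairing_bounded_def using Theta_restr pairing_restr by metis

lemma pairing_bounded_mono: "pairing_bounded M h r \<Longrightarrow> r \<le> s \<Longrightarrow> pairing_bounded M h s"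
  unfolding pairing_bounded_def by (meson order.trans)

lemma abs_pairing_le:
  assumes h: "pairing_bounded M h r" and x: "x \<in> c00"
  shows "\<bar>pairing h x\<bar> \<le> r * normM M x"
proof (rule field_le_epsilon)
  fix e :: real
  assume e: "e > 0"
  have r: "r \<ge> 0" using pairing_bounded_nonneg[OF h] .
  define t where "t = normM M x + e / (r + 1)"
  have t: "t > 0" "normM M x < t"
    unfolding t_def using normM_nonneg[OF x, of M] e r by (auto intro: add_nonneg_pos)
  have "(\<lambda>n. (1/t) * x n) \<in> Theta M" using Theta_if_normM_less[OF x t(2)] by simp
  then have "\<bar>pairing (\<lambda>n. (1/t) * x n) h\<bar> \<le> r" using h unfolding pairing_bounded_def by blast
  then have "\<bar>(1/t) * pairing x h\<bar> \<le> r" by (simp only: pairing_scale_left)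
  then have "\<bar>pairing x h\<bar> / t \<le> r" using t by (simp add: abs_mult)
  then have "\<bar>pairing h x\<bar> \<le> r * t" using t by (simp add: pairing_commute pos_divide_le_eq)
  also have "\<dots> \<le> r * normM M x + e"
  proof -
    have "r * (e / (r + 1)) \<le> e" using r e by (simp add: field_simps)
    then show ?thesis unfolding t_def by (simp add: distrib_left)
  qed
  finally show "\<bar>pairing h x\<bar> \<le> r * normM M x + e" .
qed

lemma abs_pairing_wsum_le_three_quarters:
  assumes a: "prob_weights a D m" and "\<theta> \<in> c00" "R \<ge> 0"
    and bound: "\<And>i. i \<in> D \<Longrightarrow> \<bar>pairing \<theta> (v i)\<bar> \<le> (if i \<in> H then R else R/2)"
    and H: "sum a (D \<inter> H) \<le> 1/2"
  shows "\<bar>pairing \<theta> (wsum a D v)\<bar> \<le> 3/4 * R"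
proof -
  have D: "finite D" "\<And>i. i \<in> D \<Longrightarrow> 0 \<le> a i" "sum a D = 1" using a unfolding prob_weights_def by auto
  have "\<bar>pairing \<theta> (wsum a D v)\<bar> \<le> (\<Sum>i\<in>D. a i * \<bar>pairing \<theta> (v i)\<bar>)"
    using D(2) by (simp add: pairing_wsum[OF \<open>\<theta> \<in> c00\<close>] sum_abs[THEN order.trans] abs_mult)
  also have "\<dots> \<le> (\<Sum>i\<in>D. (a i + (if i \<in> H then a i else 0)) * (R/2))"
  proof (rule sum_mono)
    fix i
    assume i: "i \<in> D"
    have "a i * \<bar>pairing \<theta> (v i)\<bar> \<le> a i * (if i \<in> H then R else R/2)"
      by (intro mult_left_mono bound[OF i] D(2)[OF i])
    then show "a i * \<bar>pairing \<theta> (v i)\<bar> \<le> (a i + (if i \<in> H then a i else 0)) * (R/2)"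
      by (cases "i \<in> H") (simp_all add: field_simps)
  qed
  also have "\<dots> = (\<Sum>i\<in>D. a i + (if i \<in> H then a i else 0)) * (R/2)"
    by (rule sum_distrib_right[symmetric])
  also have "(\<Sum>i\<in>D. a i + (if i \<in> H then a i else 0)) = sum a D + sum a (D \<inter> H)"
    by (simp add: sum.distrib sum.inter_restrict[OF D(1)])
  also have "(sum a D + sum a (D \<inter> H)) * (R/2) \<le> (1 + 1/2) * (R/2)"
    using D(3) H \<open>R \<ge> 0\<close> by (intro mult_right_mono) auto
  finally show ?thesis by simp
qed

lemma admissible_witness_mono:
  fixes Es :: "nat set list"
  assumes ne: "\<And>k. k < length Es \<Longrightarrow> Es!k \<noteq> {}"
    and ms: "\<forall>k<length Es. \<forall>j\<in>Es!k. ms!k \<le> j" "\<forall>k. Suc k < length Es \<longrightarrow> (\<forall>j\<in>Es!k. j < ms!Suc k)"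
    and "i \<le> j" "j < length Es"
  shows "ms!i \<le> ms!j"
  using assms(4,5)
proof (induction j)
  case (Suc j)
  show ?case
  proof (cases "i = Suc j")
    case False
    then have "ms!i \<le> ms!j" using Suc by auto
    obtain c where "c \<in> Es!j" using ne Suc.prems by fastforce
    then have "ms!j \<le> c" "c < ms!Suc j" using ms Suc.prems by auto
    then show ?thesis using \<open>ms!i \<le> ms!j\<close> by linarith
  qed simp
qed simp

lemma admissible_meets_interval_once:
  assumes adm: "admissible M Es" and ms: "length ms = length Es"
    "\<forall>k<length Es. \<forall>j\<in>Es!k. ms!k \<le> j" "\<forall>k. Suc k < length Es \<longrightarrow> (\<forall>j\<in>Es!k. j < ms!Suc k)"
    and gap: "\<forall>m\<in>set ms. m < l \<or> h < m"
    and k: "k < length Es" "Es!k \<inter> {l..h} \<noteq> {}" and k': "k' < length Es" "Es!k' \<inter> {l..h} \<noteq> {}"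
  shows "k = k'"
proof (rule ccontr)
  have ne: "\<And>k. k < length Es \<Longrightarrow> Es!k \<noteq> {}" using adm unfolding admissible_def by blast
  have less: False if "i < i'" "i' < length Es" "a \<in> Es!i \<inter> {l..h}" "b \<in> Es!i' \<inter> {l..h}" for i i' a b
  proof -
    have "a < ms!Suc i" using ms(3) that by auto
    moreover have "ms!Suc i \<le> ms!i'" using admissible_witness_mono[OF ne ms(2,3)] that by auto
    moreover have "ms!i' \<le> b" using ms(2) that by auto
    moreover have "ms!Suc i \<in> set ms" using that ms(1) by auto
    ultimately show False using gap that by fastforce
  qed
  assume "k \<noteq> k'"
  obtain a b where "a \<in> Es!k \<inter> {l..h}" "b \<in> Es!k' \<inter> {l..h}" using k(2) k'(2) by blast
  then show False
    using less[of k k' a b] less[of k' k b a] k(1) k'(1) \<open>k \<noteq> k'\<close> by (cases "k < k'") auto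
qed

lemma abs_sum_le_if_at_most_one:
  fixes t :: "'a \<Rightarrow> real"
  assumes "finite K" "R \<ge> 0" "\<And>k. k \<in> K \<Longrightarrow> \<bar>t k\<bar> \<le> R"
    and "\<And>k k'. k \<in> K \<Longrightarrow> k' \<in> K \<Longrightarrow> t k \<noteq> 0 \<Longrightarrow> t k' \<noteq> 0 \<Longrightarrow> k = k'"
  shows "\<bar>\<Sum>k\<in>K. t k\<bar> \<le> R"
proof (cases "\<exists>k\<in>K. t k \<noteq> 0")
  case True
  then obtain k where k: "k \<in> K" "t k \<noteq> 0" by blast
  then have "(\<Sum>k\<in>K. t k) = t k"
    using assms(1,4) by (subst sum.mono_neutral_right[of _ "{k}"]) auto
  then show ?thesis using assms(3) k by simp
qed (use assms in simp)

lemma abs_pairing_admissible_le_half: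
  assumes adm: "length xs = length Es" "set xs \<subseteq> Theta M"
    and v: "v \<in> c00" "supp v \<subseteq> {l..h}" "pairing_bounded M v R"
    and once: "\<And>k k'. k < length Es \<Longrightarrow> k' < length Es \<Longrightarrow> Es!k \<inter> {l..h} \<noteq> {} \<Longrightarrow>
      Es!k' \<inter> {l..h} \<noteq> {} \<Longrightarrow> k = k'"
  shows "\<bar>pairing (\<lambda>n. (1/2) * (\<Sum>k<length Es. restr (Es!k) (xs!k) n)) v\<bar> \<le> R/2"
proof -
  let ?t = "\<lambda>k. pairing (restr (Es!k) (xs!k)) v"
  have meets: "Es!k \<inter> {l..h} \<noteq> {}" if "?t k \<noteq> 0" for k
  proof
    assume "Es!k \<inter> {l..h} = {}"
    then have "supp (restr (Es!k) (xs!k)) \<inter> supp v = {}"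
      using v(2) by (auto simp: supp_def restr_def split: split_indicator_asm)
    then show False using that pairing_disjoint by simp
  qed
  have "\<bar>?t k\<bar> \<le> R" if "k < length Es" for k
    using v(3) Theta_restr adm that unfolding pairing_bounded_def by (simp add: subset_iff)
  then have "\<bar>\<Sum>k<length Es. ?t k\<bar> \<le> R"
    using meets once pairing_bounded_nonneg[OF v(3)] by (intro abs_sum_le_if_at_most_one) auto
  moreover have "pairing (\<lambda>n. (1/2) * (\<Sum>k<length Es. restr (Es!k) (xs!k) n)) v =
      (1/2) * (\<Sum>k<length Es. ?t k)"
    by (rule pairing_sum_left[OF v(1)])
  ultimately show ?thesis by (simp add: abs_mult)
qed

lemma singleton_in_down_closure:
  assumes M3: "\<forall>A :: nat set. card A = 3 \<longrightarrow> A \<in> M"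
  shows "{p} \<in> down_closure M"
  using M3[rule_format, of "{p, Suc p, Suc (Suc p)}"] unfolding down_closure_def by auto

lemma average_contracts:
  assumes M3: "\<forall>A :: nat set. card A = 3 \<longrightarrow> A \<in> M" and small: "small_averages (down_closure M)"
    and blocks: "block_ranges lo hi" and v: "\<And>i. v i \<in> c00" "\<And>i. supp (v i) \<subseteq> {lo i..hi i}"
    and R: "\<And>i. pairing_bounded M (v i) R"
  shows "\<exists>a D. prob_weights a D m \<and> pairing_bounded M (wsum a D v) (3/4 * R)"
proof -
  have "R \<ge> 0" using pairing_bounded_nonneg[OF R] .
  obtain a D where aD: "prob_weights a D m" "\<forall>A\<in>down_closure M. sum a (D \<inter> blocks_meeting lo hi A) < 1/2"
    using small blocks unfolding small_averages_def by (meson zero_less_divide_1_iff zero_less_numeral)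
  have "\<bar>pairing \<theta> (wsum a D v)\<bar> \<le> 3/4 * R" if "\<theta> \<in> Theta M" for \<theta>
    using that
  proof (induction \<theta> rule: Theta_induct)
    case (unit p)
    let ?H = "blocks_meeting lo hi {p}"
    have "pairing (unitvec p) (v i) = 0" if "i \<notin> ?H" for i
      using that v(2)[of i] by (auto simp: pairing_unitvec blocks_meeting_def supp_def)
    then have "\<bar>pairing (unitvec p) (v i)\<bar> \<le> (if i \<in> ?H then R else R/2)" for i
      using R[of i] \<open>R \<ge> 0\<close> unitvec_in_Theta unfolding pairing_bounded_def by auto
    moreover have "sum a (D \<inter> ?H) \<le> 1/2"
      using aD(2) singleton_in_down_closure[OF M3] by (simp add: less_imp_le)
    ultimately show ?case
      by (intro abs_pairing_wsum_le_three_quarters[OF aD(1) unitvec_in_c00 \<open>R \<ge> 0\<close>])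
  next
    case (lincomb x y s t)
    have "\<bar>pairing (\<lambda>n. s * x n + t * y n) (wsum a D v)\<bar>
        \<le> \<bar>s\<bar> * \<bar>pairing x (wsum a D v)\<bar> + \<bar>t\<bar> * \<bar>pairing y (wsum a D v)\<bar>"
      using lincomb Theta_in_c00 by (simp add: pairing_lincomb_left abs_mult[symmetric] abs_triangle_ineq)
    also have "\<dots> \<le> \<bar>s\<bar> * (3/4 * R) + \<bar>t\<bar> * (3/4 * R)"
      using lincomb by (intro add_mono mult_left_mono) auto
    also have "\<dots> = (\<bar>s\<bar> + \<bar>t\<bar>) * (3/4 * R)"
      by (simp add: distrib_right)
    also have "\<dots> \<le> 1 * (3/4 * R)"
      using lincomb \<open>R \<ge> 0\<close> by (intro mult_right_mono) auto
    finally show ?case by simp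
  next
    case (admissible Es xs)
    let ?\<theta> = "\<lambda>n. (1/2) * (\<Sum>k<length Es. restr (Es!k) (xs!k) n)"
    obtain F ms where F: "F \<in> M" "length ms = length Es" "set ms \<subseteq> F"
      "\<forall>k<length Es. \<forall>j\<in>Es!k. ms!k \<le> j" "\<forall>k. Suc k < length Es \<longrightarrow> (\<forall>j\<in>Es!k. j < ms!Suc k)"
      using admissible(1) unfolding admissible_def by blast
    let ?H = "blocks_meeting lo hi (set ms)"
    have "\<bar>pairing ?\<theta> (v i)\<bar> \<le> (if i \<in> ?H then R else R/2)" for i
    proof (cases "i \<in> ?H")
      case True
      then show ?thesis using R[of i] Theta_admissible[OF admissible(1-3)] unfolding pairing_bounded_def by simp
    next
      case False
      then have gap: "\<forall>m\<in>set ms. m < lo i \<or> hi i < m" unfolding blocks_meeting_def by auto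
      have "\<bar>pairing ?\<theta> (v i)\<bar> \<le> R/2"
        by (rule abs_pairing_admissible_le_half[OF admissible(2,3) v(1)[of i] v(2)[of i] R[of i]])
          (use admissible_meets_interval_once[OF admissible(1) F(2,4,5) gap] in blast)
      then show ?thesis using False by simp
    qed
    moreover have "set ms \<in> down_closure M" using F(1,3) unfolding down_closure_def by blast
    then have "sum a (D \<inter> ?H) \<le> 1/2" using aD(2) by (simp add: less_imp_le)
    ultimately show ?case
      by (intro abs_pairing_wsum_le_three_quarters[OF aD(1) Theta_in_c00[OF Theta_admissible[OF admissible(1-3)]] \<open>R \<ge> 0\<close>])
  qed
  then show ?thesis using aD(1) unfolding pairing_bounded_def by blast
qed

lemma supp_wsum_blocks:
  assumes "block_ranges lo hi" "\<And>i. supp (v i) \<subseteq> {lo i..hi i}" "finite D"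
  shows "supp (wsum a D v) \<subseteq> {lo (Min D)..hi (Max D)}"
proof
  fix n
  assume "n \<in> supp (wsum a D v)"
  then obtain i where i: "i \<in> D" "n \<in> supp (v i)" using supp_wsum by blast
  then have "lo (Min D) \<le> lo i" "hi i \<le> hi (Max D)"
    using assms(3) block_ranges_mono[OF assms(1)] by auto
  then show "n \<in> {lo (Min D)..hi (Max D)}" using assms(2)[of i] i(2) by auto
qed

lemma small_average_of_blocks:
  assumes M3: "\<forall>A :: nat set. card A = 3 \<longrightarrow> A \<in> M" and small: "small_averages (down_closure M)"
    and blocks: "block_ranges lo hi" and v: "\<And>i. v i \<in> c00" "\<And>i. supp (v i) \<subseteq> {lo i..hi i}"
    and R: "\<And>i. pairing_bounded M (v i) R"
  shows "\<exists>a D. prob_weights a D m \<and> pairing_bounded M (wsum a D v) ((3/4)^k * R)"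
proof (induction k arbitrary: m)
  case 0
  have "wsum (\<lambda>_. 1) {m} v = v m" unfolding wsum_def by simp
  then show ?case using prob_weights_singleton[of m] R by (intro exI[of _ "\<lambda>_. 1"] exI[of _ "{m}"]) auto
next
  case (Suc k)
  obtain A Ds ms where w: "ms 0 = m" "\<And>j. prob_weights (A j) (Ds j) (ms j)"
      "\<And>j. pairing_bounded M (wsum (A j) (Ds j) v) ((3/4)^k * R)" "\<And>j. ms (Suc j) = Max (Ds j) + 1"
    by (rule obtain_successive_weights[where m = m, OF Suc.IH]) blast
  have fin: "finite (Ds j)" for j using w(2) unfolding prob_weights_def by auto
  let ?lo = "\<lambda>j. lo (Min (Ds j))" and ?hi = "\<lambda>j. hi (Max (Ds j))"
  have grouped: "block_ranges ?lo ?hi"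
    by (rule block_ranges_grouped[of lo hi Ds, OF blocks successive_weights_Max_Min[of A Ds ms, OF w(2,4)]
          successive_weights_Min_Max[of A Ds ms, OF w(2,4)]])
  have c00: "wsum (A j) (Ds j) v \<in> c00" for j using fin v(1) by (intro wsum_in_c00)
  have supp: "supp (wsum (A j) (Ds j) v) \<subseteq> {?lo j..?hi j}" for j
    using supp_wsum_blocks[OF blocks v(2) fin] .
  obtain b E where bE: "prob_weights b E 0"
      "pairing_bounded M (wsum b E (\<lambda>j. wsum (A j) (Ds j) v)) (3/4 * ((3/4)^k * R))"
    using average_contracts[where v = "\<lambda>j. wsum (A j) (Ds j) v" and m = 0, OF M3 small grouped c00 supp w(3)]
    by blast
  have "finite E" using bE(1) unfolding prob_weights_def by auto
  then have "wsum (compose_weights b E A Ds) (\<Union>j\<in>E. Ds j) v = wsum b E (\<lambda>j. wsum (A j) (Ds j) v)"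
    using fin by (intro wsum_compose_weights)
  moreover have "prob_weights (compose_weights b E A Ds) (\<Union>j\<in>E. Ds j) m"
    using w successive_weights_mono[of A Ds ms, OF w(2,4), of 0] by (intro prob_weights_compose[OF bE(1)]) auto
  ultimately show ?case
    using bE(2) by (intro exI[of _ "compose_weights b E A Ds"] exI[of _ "\<Union>j\<in>E. Ds j"]) (simp add: mult.assoc)
qed

lemma small_average_of_blocks_le:
  assumes M3: "\<forall>A :: nat set. card A = 3 \<longrightarrow> A \<in> M" and small: "small_averages (down_closure M)"
    and blocks: "block_ranges lo hi" and v: "\<And>i. v i \<in> c00" "\<And>i. supp (v i) \<subseteq> {lo i..hi i}"
    and R: "\<And>i. pairing_bounded M (v i) R" and "\<eta> > 0"
  shows "\<exists>a D. prob_weights a D m \<and> pairing_bounded M (wsum a D v) \<eta>"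
proof -
  have "R \<ge> 0" using pairing_bounded_nonneg[OF R] .
  obtain k where k: "(3/4::real)^k < \<eta> / (R + 1)"
    using real_arch_pow_inv[of "\<eta> / (R + 1)" "3/4"] \<open>\<eta> > 0\<close> \<open>R \<ge> 0\<close> by auto
  have "(3/4::real)^k * R \<le> (3/4)^k * (R + 1)" by simp
  also have "\<dots> < \<eta>" using k \<open>R \<ge> 0\<close> by (simp add: pos_less_divide_eq)
  finally show ?thesis
    using small_average_of_blocks[OF M3 small blocks v R, of m k] pairing_bounded_mono by fastforce
qed

subsection \<open>Norming functionals\<close>

definition linear_on :: "(nat \<Rightarrow> real) set \<Rightarrow> ((nat \<Rightarrow> real) \<Rightarrow> real) \<Rightarrow> bool" where
  "linear_on V \<phi> \<longleftrightarrow> (\<forall>u\<in>V. \<forall>u'\<in>V. \<forall>a b. \<phi> (\<lambda>n. a * u n + b * u' n) = a * \<phi> u + b * \<phi> u')"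

definition c00_subspace :: "(nat \<Rightarrow> real) set \<Rightarrow> bool" where
  "c00_subspace V \<longleftrightarrow> V \<subseteq> c00 \<and> (\<lambda>n. 0) \<in> V \<and> (\<forall>u\<in>V. \<forall>u'\<in>V. \<forall>a b. (\<lambda>n. a * u n + b * u' n) \<in> V)"

definition add_line :: "(nat \<Rightarrow> real) set \<Rightarrow> (nat \<Rightarrow> real) \<Rightarrow> (nat \<Rightarrow> real) set" where
  "add_line V e = {(\<lambda>n. u n + s * e n) | u s. u \<in> V}"

lemma linear_onD: "linear_on V \<phi> \<Longrightarrow> u \<in> V \<Longrightarrow> u' \<in> V \<Longrightarrow> \<phi> (\<lambda>n. a * u n + b * u' n) = a * \<phi> u + b * \<phi> u'"
  unfolding linear_on_def by blast

lemma linear_on_scale: "linear_on V \<phi> \<Longrightarrow> u \<in> V \<Longrightarrow> \<phi> (\<lambda>n. a * u n) = a * \<phi> u"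
  using linear_onD[of V \<phi> u u a 0] by simp

lemma c00_subspaceD: "c00_subspace V \<Longrightarrow> u \<in> V \<Longrightarrow> u' \<in> V \<Longrightarrow> (\<lambda>n. a * u n + b * u' n) \<in> V"
  unfolding c00_subspace_def by blast

lemma add_line_unique:
  assumes V: "c00_subspace V" and e: "e \<notin> V" and u: "u \<in> V" "u' \<in> V"
    and eq: "(\<lambda>n. u n + s * e n) = (\<lambda>n. u' n + s' * e n)"
  shows "s = s'" "u = u'"
proof -
  show "s = s'"
  proof (rule ccontr)
    assume "s \<noteq> s'"
    have "e n = (1 / (s - s')) * u' n + (- 1 / (s - s')) * u n" for n
    proof -
      have "(s - s') * e n = u' n - u n" using fun_cong[OF eq, of n] by (simp add: algebra_simps)
      then have "e n = (u' n - u n) / (s - s')" using \<open>s \<noteq> s'\<close> by (simp add: eq_divide_eq mult.commute)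
      then show ?thesis by (simp add: diff_divide_distrib)
    qed
    then have "e = (\<lambda>n. (1 / (s - s')) * u' n + (- 1 / (s - s')) * u n)" by blast
    moreover have "(\<lambda>n. (1 / (s - s')) * u' n + (- 1 / (s - s')) * u n) \<in> V"
      by (rule c00_subspaceD[OF V u(2) u(1)])
    ultimately show False using e by simp
  qed
  then show "u = u'" using eq by (auto simp: fun_eq_iff dest: fun_cong)
qed

text \<open>The classical one-step extension: any value between the two bounds below makes the extension
  to \<open>V + \<real>e\<close> dominated by the sublinear \<open>p\<close>.\<close>
lemma extension_value_exists:
  assumes V: "c00_subspace V" and e: "e \<in> c00" and lin: "linear_on V \<phi>" and dom: "\<forall>u\<in>V. \<phi> u \<le> p u"
    and p_add: "\<And>x y. x \<in> c00 \<Longrightarrow> y \<in> c00 \<Longrightarrow> p (\<lambda>n. x n + y n) \<le> p x + p y"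
  shows "\<exists>c. (\<forall>w\<in>V. \<phi> w - p (\<lambda>n. w n - e n) \<le> c) \<and> (\<forall>w\<in>V. c \<le> p (\<lambda>n. w n + e n) - \<phi> w)"
proof -
  have Vc: "V \<subseteq> c00" "(\<lambda>n. 0) \<in> V" using V unfolding c00_subspace_def by auto
  have key: "\<phi> w - p (\<lambda>n. w n - e n) \<le> p (\<lambda>n. w' n + e n) - \<phi> w'" if w: "w \<in> V" "w' \<in> V" for w w'
  proof -
    have "\<phi> w + \<phi> w' = \<phi> (\<lambda>n. 1 * w n + 1 * w' n)" using linear_onD[OF lin w, of 1 1] by simp
    also have "\<dots> \<le> p (\<lambda>n. (w n - e n) + (w' n + e n))"
      using dom c00_subspaceD[OF V w, of 1 1] by simp
    also have "\<dots> \<le> p (\<lambda>n. w n - e n) + p (\<lambda>n. w' n + e n)"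
      using Vc(1) w e by (intro p_add) (auto intro: c00_lincomb[of _ _ 1 "-1", simplified] c00_add)
    finally show ?thesis by simp
  qed
  define S where "S = (\<lambda>w. \<phi> w - p (\<lambda>n. w n - e n)) ` V"
  have "S \<noteq> {}" unfolding S_def using Vc(2) by blast
  have "bdd_above S"
    unfolding S_def using key[OF _ Vc(2)] by (auto intro!: bdd_aboveI[of _ "p e - \<phi> (\<lambda>n. 0)"])
  have "\<phi> w - p (\<lambda>n. w n - e n) \<le> Sup S" if "w \<in> V" for w
    using \<open>bdd_above S\<close> that unfolding S_def by (intro cSup_upper) auto
  moreover have "Sup S \<le> p (\<lambda>n. w n + e n) - \<phi> w" if "w \<in> V" for w
    using \<open>S \<noteq> {}\<close> key that unfolding S_def by (intro cSup_least) auto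
  ultimately show ?thesis by blast
qed

lemma extension_dominated:
  assumes V: "c00_subspace V" and e: "e \<in> c00" and lin: "linear_on V \<phi>" and dom: "\<forall>u\<in>V. \<phi> u \<le> p u"
    and p_scale: "\<And>x t. x \<in> c00 \<Longrightarrow> t > 0 \<Longrightarrow> p (\<lambda>n. t * x n) = t * p x"
    and c: "\<forall>w\<in>V. \<phi> w - p (\<lambda>n. w n - e n) \<le> c" "\<forall>w\<in>V. c \<le> p (\<lambda>n. w n + e n) - \<phi> w"
    and u: "u \<in> V"
  shows "\<phi> u + s * c \<le> p (\<lambda>n. u n + s * e n)"
proof (cases s "0::real" rule: linorder_cases)
  case equal
  then show ?thesis using dom u by simp
next
  case greater
  let ?w = "\<lambda>n. (1/s) * u n"
  have w: "?w \<in> V" using c00_subspaceD[OF V u u, of "1/s" 0] by simp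
  have "?w \<in> c00" using V w unfolding c00_subspace_def by blast
  then have "(\<lambda>n. ?w n + e n) \<in> c00" using e by (rule c00_add)
  then have "s * p (\<lambda>n. ?w n + e n) = p (\<lambda>n. u n + s * e n)"
    using p_scale[of "\<lambda>n. ?w n + e n" s] greater by (simp add: distrib_left)
  moreover have "s * \<phi> ?w = \<phi> u" using linear_on_scale[OF lin u, of "1/s"] greater by simp
  moreover have "s * c \<le> s * (p (\<lambda>n. ?w n + e n) - \<phi> ?w)" using c(2) w greater by simp
  ultimately show ?thesis by (simp add: right_diff_distrib)
next
  case less
  let ?t = "- s"
  let ?w = "\<lambda>n. (1/?t) * u n"
  have w: "?w \<in> V" using c00_subspaceD[OF V u u, of "1/?t" 0] by simp
  have "?w \<in> c00" using V w unfolding c00_subspace_def by blast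
  then have "(\<lambda>n. 1 * ?w n + (-1) * e n) \<in> c00" using e by (rule c00_lincomb)
  then have "(\<lambda>n. ?w n - e n) \<in> c00" by simp
  then have "?t * p (\<lambda>n. ?w n - e n) = p (\<lambda>n. u n + s * e n)"
    using p_scale[of "\<lambda>n. ?w n - e n" ?t] less by (simp add: right_diff_distrib)
  moreover have "?t * \<phi> ?w = \<phi> u" using linear_on_scale[OF lin u, of "1/?t"] less by simp
  moreover have "?t * (\<phi> ?w - p (\<lambda>n. ?w n - e n)) \<le> ?t * c" using c(1) w less by simp
  ultimately show ?thesis by (simp add: right_diff_distrib)
qed

lemma dominated_extension_step:
  assumes V: "c00_subspace V" and e: "e \<in> c00" and lin: "linear_on V \<phi>" and dom: "\<forall>u\<in>V. \<phi> u \<le> p u"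
    and p_add: "\<And>x y. x \<in> c00 \<Longrightarrow> y \<in> c00 \<Longrightarrow> p (\<lambda>n. x n + y n) \<le> p x + p y"
    and p_scale: "\<And>x t. x \<in> c00 \<Longrightarrow> t > 0 \<Longrightarrow> p (\<lambda>n. t * x n) = t * p x"
  shows "\<exists>\<psi>. linear_on (add_line V e) \<psi> \<and> (\<forall>z\<in>add_line V e. \<psi> z \<le> p z) \<and> (\<forall>u\<in>V. \<psi> u = \<phi> u)"
proof (cases "e \<in> V")
  case True
  have "add_line V e = V"
  proof
    show "add_line V e \<subseteq> V"
    proof
      fix z
      assume "z \<in> add_line V e"
      then obtain u s where "u \<in> V" "z = (\<lambda>n. 1 * u n + s * e n)" unfolding add_line_def by auto
      then show "z \<in> V" using c00_subspaceD[OF V _ True] by blast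
    qed
    have "u = (\<lambda>n. u n + 0 * e n)" for u by simp
    then show "V \<subseteq> add_line V e" unfolding add_line_def by blast
  qed
  then show ?thesis using lin dom by auto
next
  case False
  obtain c where c: "\<forall>w\<in>V. \<phi> w - p (\<lambda>n. w n - e n) \<le> c" "\<forall>w\<in>V. c \<le> p (\<lambda>n. w n + e n) - \<phi> w"
    using extension_value_exists[where p = p and \<phi> = \<phi> and V = V and e = e, OF V e lin dom p_add] by blast
  define \<psi> where "\<psi> z = (THE t. \<exists>u s. u \<in> V \<and> z = (\<lambda>n. u n + s * e n) \<and> t = \<phi> u + s * c)" for z
  have \<psi>: "\<psi> (\<lambda>n. u n + s * e n) = \<phi> u + s * c" if u: "u \<in> V" for u s
  proof -
    have "(\<exists>u' s'. u' \<in> V \<and> (\<lambda>n. u n + s * e n) = (\<lambda>n. u' n + s' * e n) \<and> t = \<phi> u' + s' * c)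
        \<longleftrightarrow> t = \<phi> u + s * c" for t
    proof
      assume "\<exists>u' s'. u' \<in> V \<and> (\<lambda>n. u n + s * e n) = (\<lambda>n. u' n + s' * e n) \<and> t = \<phi> u' + s' * c"
      then obtain u' s' where u': "u' \<in> V" "(\<lambda>n. u n + s * e n) = (\<lambda>n. u' n + s' * e n)" "t = \<phi> u' + s' * c"
        by blast
      then show "t = \<phi> u + s * c" using add_line_unique[OF V False u u'(1,2)] by simp
    qed (use u in blast)
    then show ?thesis unfolding \<psi>_def by simp
  qed
  have "linear_on (add_line V e) \<psi>"
    unfolding linear_on_def add_line_def
  proof clarify
    fix u s u' s' a b
    assume u: "u \<in> V" "u' \<in> V"
    have eq: "(\<lambda>n. a * (u n + s * e n) + b * (u' n + s' * e n)) =
        (\<lambda>n. (a * u n + b * u' n) + (a * s + b * s') * e n)"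
      by (simp add: fun_eq_iff algebra_simps)
    have "\<psi> (\<lambda>n. (a * u n + b * u' n) + (a * s + b * s') * e n) = \<phi> (\<lambda>n. a * u n + b * u' n) + (a * s + b * s') * c"
      by (rule \<psi>[OF c00_subspaceD[OF V u]])
    then show "\<psi> (\<lambda>n. a * (u n + s * e n) + b * (u' n + s' * e n)) =
        a * \<psi> (\<lambda>n. u n + s * e n) + b * \<psi> (\<lambda>n. u' n + s' * e n)"
      unfolding eq using \<psi>[OF u(1)] \<psi>[OF u(2)] linear_onD[OF lin u] by (simp add: algebra_simps)
  qed
  moreover have "\<psi> z \<le> p z" if z: "z \<in> add_line V e" for z
  proof -
    obtain u s where "u \<in> V" "z = (\<lambda>n. u n + s * e n)" using z unfolding add_line_def by blast
    then show ?thesis using \<psi> extension_dominated[OF V e lin dom p_scale c] by simp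
  qed
  moreover have "\<forall>u\<in>V. \<psi> u = \<phi> u" using \<psi>[of _ 0] by simp
  ultimately show ?thesis by blast
qed

definition vanishing_from :: "nat \<Rightarrow> (nat \<Rightarrow> real) set" where
  "vanishing_from j = {z. \<forall>i\<ge>j. z i = 0}"

definition initial_span :: "(nat \<Rightarrow> real) \<Rightarrow> nat \<Rightarrow> (nat \<Rightarrow> real) set" where
  "initial_span x j = {(\<lambda>n. s * x n + w n) | s w. w \<in> vanishing_from j}"

lemma vanishing_from_in_c00: "z \<in> vanishing_from j \<Longrightarrow> z \<in> c00"
  unfolding vanishing_from_def by (intro c00_if_bounded_support) auto

lemma vanishing_from_lincomb:
  "z \<in> vanishing_from j \<Longrightarrow> z' \<in> vanishing_from j \<Longrightarrow> (\<lambda>n. a * z n + b * z' n) \<in> vanishing_from j"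
  unfolding vanishing_from_def by auto

lemma vanishing_in_initial_span: "z \<in> vanishing_from j \<Longrightarrow> z \<in> initial_span x j"
  unfolding initial_span_def by (intro CollectI exI[of _ 0] exI[of _ z]) simp

lemma self_in_initial_span: "x \<in> initial_span x j"
  unfolding initial_span_def vanishing_from_def by (intro CollectI exI[of _ 1] exI[of _ "\<lambda>n. 0"]) simp

lemma c00_subspace_initial_span: "x \<in> c00 \<Longrightarrow> c00_subspace (initial_span x j)"
  unfolding c00_subspace_def
proof (intro conjI ballI allI subsetI)
  fix u u' a b
  assume "u \<in> initial_span x j" "u' \<in> initial_span x j"
  then obtain s w s' w' where "w \<in> vanishing_from j" "u = (\<lambda>n. s * x n + w n)"
      "w' \<in> vanishing_from j" "u' = (\<lambda>n. s' * x n + w' n)"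
    unfolding initial_span_def by blast
  moreover have "(\<lambda>n. a * (s * x n + w n) + b * (s' * x n + w' n)) =
      (\<lambda>n. (a * s + b * s') * x n + (a * w n + b * w' n))"
    by (simp add: fun_eq_iff algebra_simps)
  ultimately show "(\<lambda>n. a * u n + b * u' n) \<in> initial_span x j"
    unfolding initial_span_def using vanishing_from_lincomb by fastforce
next
  show "(\<lambda>n. 0) \<in> initial_span x j"
    by (rule vanishing_in_initial_span) (simp add: vanishing_from_def)
next
  fix u
  assume "x \<in> c00" "u \<in> initial_span x j"
  then show "u \<in> c00"
    unfolding initial_span_def by (auto intro: c00_lincomb[of _ _ _ 1, simplified] vanishing_from_in_c00)
qed

lemma initial_span_Suc: "initial_span x (Suc j) = add_line (initial_span x j) (unitvec j)"
proof (intro equalityI subsetI)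
  fix z
  assume "z \<in> initial_span x (Suc j)"
  then obtain s w where w: "w \<in> vanishing_from (Suc j)" "z = (\<lambda>n. s * x n + w n)"
    unfolding initial_span_def by blast
  define w' where "w' = (\<lambda>i. if i = j then 0 else w i)"
  have "w' \<in> vanishing_from j" using w(1) unfolding vanishing_from_def w'_def by (auto simp: le_Suc_eq)
  then have "(\<lambda>n. s * x n + w' n) \<in> initial_span x j" unfolding initial_span_def by blast
  moreover have "z = (\<lambda>n. (s * x n + w' n) + w j * unitvec j n)"
    using w(2) unfolding w'_def unitvec_def by (auto simp: fun_eq_iff)
  ultimately show "z \<in> add_line (initial_span x j) (unitvec j)"
    unfolding add_line_def by (intro CollectI exI[of _ "\<lambda>n. s * x n + w' n"] exI[of _ "w j"]) simp
next
  fix z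
  assume "z \<in> add_line (initial_span x j) (unitvec j)"
  then obtain s w t where w: "w \<in> vanishing_from j" "z = (\<lambda>n. (s * x n + w n) + t * unitvec j n)"
    unfolding add_line_def initial_span_def by blast
  then have "(\<lambda>n. w n + t * unitvec j n) \<in> vanishing_from (Suc j)"
    unfolding vanishing_from_def unitvec_def by auto
  moreover have "z = (\<lambda>n. s * x n + (w n + t * unitvec j n))" using w(2) by (simp add: add.assoc)
  ultimately show "z \<in> initial_span x (Suc j)"
    unfolding initial_span_def by (intro CollectI exI[of _ s] exI[of _ "\<lambda>n. w n + t * unitvec j n"]) simp
qed

lemma normM_dominated_functional:
  assumes x: "x \<in> c00"
  shows "\<exists>\<phi>. linear_on (initial_span x j) \<phi> \<and> (\<forall>u\<in>initial_span x j. \<phi> u \<le> normM M u) \<and> \<phi> x = normM M x"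
proof (induction j)
  case 0
  have span0: "initial_span x 0 = {(\<lambda>n. s * x n) | s. True}"
  proof (intro equalityI subsetI)
    fix z
    assume "z \<in> {(\<lambda>n. s * x n) | s. True}"
    then obtain s where "z = (\<lambda>n. s * x n + 0)" by auto
    then show "z \<in> initial_span x 0"
      unfolding initial_span_def vanishing_from_def by (intro CollectI exI[of _ s] exI[of _ "\<lambda>n. 0"]) simp
  qed (auto simp: initial_span_def vanishing_from_def)
  show ?case
  proof (cases "x = (\<lambda>n. 0)")
    case True
    then show ?thesis
      using normM_zero normM_nonneg c00_subspace_initial_span[OF x]
      by (intro exI[of _ "\<lambda>_. 0"]) (auto simp: linear_on_def c00_subspace_def subset_iff)
  next
    case False
    then obtain n0 where n0: "x n0 \<noteq> 0" by auto
    define \<phi> where "\<phi> u = u n0 / x n0 * normM M x" for u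
    have "\<phi> (\<lambda>n. s * x n) \<le> normM M (\<lambda>n. s * x n)" for s
      using n0 normM_nonneg[OF x, of M] unfolding \<phi>_def normM_scale[OF x]
      by (simp add: mult_right_mono)
    then show ?thesis
      unfolding span0 using n0 by (intro exI[of _ \<phi>]) (auto simp: linear_on_def \<phi>_def field_simps)
  qed
next
  case (Suc j)
  then obtain \<phi> where \<phi>: "linear_on (initial_span x j) \<phi>" "\<forall>u\<in>initial_span x j. \<phi> u \<le> normM M u"
    "\<phi> x = normM M x"
    by blast
  have scale: "normM M (\<lambda>n. t * y n) = t * normM M y" if "y \<in> c00" "t > 0" for y t
    using normM_scale[OF that(1)] that(2) by simp
  obtain \<psi> where \<psi>: "linear_on (add_line (initial_span x j) (unitvec j)) \<psi>"
      "\<forall>z\<in>add_line (initial_span x j) (unitvec j). \<psi> z \<le> normM M z" "\<forall>u\<in>initial_span x j. \<psi> u = \<phi> u"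
    using dominated_extension_step[OF c00_subspace_initial_span[OF x] unitvec_in_c00 \<phi>(1,2)
        normM_triangle scale] by blast
  then show ?case
    unfolding initial_span_Suc using \<phi>(3) self_in_initial_span[of x j] by (intro exI[of _ \<psi>]) simp
qed

lemma linear_on_sum:
  assumes lin: "linear_on V \<phi>" and V: "c00_subspace V" and "finite I" "\<And>i. i \<in> I \<Longrightarrow> v i \<in> V"
  shows "(\<lambda>n. \<Sum>i\<in>I. c i * v i n) \<in> V \<and> \<phi> (\<lambda>n. \<Sum>i\<in>I. c i * v i n) = (\<Sum>i\<in>I. c i * \<phi> (v i))"
  using assms(3,4)
proof (induction I rule: finite_induct)
  case empty
  have "(\<lambda>n. 0) \<in> V" using V unfolding c00_subspace_def by blast
  moreover have "\<phi> (\<lambda>n. 0 * 0 + 0 * 0) = 0 * \<phi> (\<lambda>n. 0) + 0 * \<phi> (\<lambda>n. 0)"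
    using linear_onD[OF lin calculation calculation] .
  ultimately show ?case by simp
next
  case (insert j I)
  then have IH: "(\<lambda>n. \<Sum>i\<in>I. c i * v i n) \<in> V" "\<phi> (\<lambda>n. \<Sum>i\<in>I. c i * v i n) = (\<Sum>i\<in>I. c i * \<phi> (v i))"
    and vj: "v j \<in> V" by auto
  have "(\<lambda>n. c j * v j n + 1 * (\<Sum>i\<in>I. c i * v i n)) \<in> V" by (rule c00_subspaceD[OF V vj IH(1)])
  moreover have "\<phi> (\<lambda>n. c j * v j n + 1 * (\<Sum>i\<in>I. c i * v i n)) = c j * \<phi> (v j) + 1 * (\<Sum>i\<in>I. c i * \<phi> (v i))"
    using linear_onD[OF lin vj IH(1), of "c j" 1] IH(2) by simp
  ultimately show ?case using insert.hyps by simp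
qed

lemma norming_vector:
  assumes x: "x \<in> c00"
  shows "\<exists>h\<in>c00. pairing_bounded M h 1 \<and> pairing h x = normM M x"
proof -
  obtain K where "\<forall>n\<in>supp x. n < K" using finite_supp[OF x] finite_nat_set_iff_bounded by blast
  then have xK: "x \<in> vanishing_from K" unfolding vanishing_from_def supp_def by (auto simp: not_less[symmetric])
  obtain \<phi> where \<phi>: "linear_on (initial_span x K) \<phi>" "\<forall>u\<in>initial_span x K. \<phi> u \<le> normM M u"
    "\<phi> x = normM M x"
    using normM_dominated_functional[OF x] by blast
  define h where "h = proj K (\<lambda>i. \<phi> (unitvec i))"
  have h: "h \<in> c00" unfolding h_def proj_def by (intro c00_if_bounded_support[of K]) simp
  have rep: "\<phi> z = pairing h z" if z: "z \<in> vanishing_from K" for z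
  proof -
    have "unitvec i \<in> initial_span x K" if "i < K" for i
      using that by (intro vanishing_in_initial_span) (simp add: vanishing_from_def unitvec_def)
    then have "\<phi> (\<lambda>n. \<Sum>i<K. z i * unitvec i n) = (\<Sum>i<K. z i * \<phi> (unitvec i))"
      using linear_on_sum[OF \<phi>(1) c00_subspace_initial_span[OF x]] by blast
    moreover have "(\<lambda>n. \<Sum>i<K. z i * unitvec i n) = z"
      using z by (auto simp: sum_unitvec vanishing_from_def fun_eq_iff not_less)
    moreover have "pairing h z = (\<Sum>i<K. h i * z i)"
      by (rule pairing_eq_sum) (auto simp: supp_def h_def proj_def)
    ultimately show ?thesis by (simp add: h_def proj_def mult.commute)
  qed
  have "\<bar>pairing \<theta> h\<bar> \<le> 1" if \<theta>: "\<theta> \<in> Theta M" for \<theta>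
  proof -
    let ?z = "restr {..<K} \<theta>"
    have z: "?z \<in> vanishing_from K" "?z \<in> Theta M" "?z \<in> c00"
      using Theta_restr[OF \<theta>] Theta_in_c00 by (auto simp: vanishing_from_def restr_def)
    have le: "\<phi> u \<le> normM M u" if "u \<in> vanishing_from K" for u
      using \<phi>(2) vanishing_in_initial_span[OF that] by blast
    have neg: "(\<lambda>n. (-1) * ?z n) \<in> vanishing_from K"
      using vanishing_from_lincomb[OF z(1) z(1), of "-1" 0] by simp
    have "\<phi> (\<lambda>n. (-1) * ?z n) = - \<phi> ?z"
      using linear_on_scale[OF \<phi>(1) vanishing_in_initial_span[OF z(1)], of "-1"] by simp
    moreover have "normM M (\<lambda>n. (-1) * ?z n) = normM M ?z" using normM_scale[OF z(3), of M "-1"] by simp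
    ultimately have "\<bar>\<phi> ?z\<bar> \<le> 1"
      using le[OF z(1)] le[OF neg] normM_le_1_if_Theta[OF z(2)] by linarith
    moreover have "pairing \<theta> h = pairing ?z h"
      by (rule pairing_restr_supp) (auto simp: supp_def h_def proj_def)
    then have "pairing \<theta> h = \<phi> ?z" using rep[OF z(1)] pairing_commute by simp
    ultimately show ?thesis by simp
  qed
  then show ?thesis
    using h rep[OF xK] \<phi>(3) unfolding pairing_bounded_def by auto
qed

subsection \<open>Reflexivity\<close>

definition coord :: "nat \<Rightarrow> (nat \<Rightarrow> real) \<Rightarrow> real" where
  "coord i = (\<lambda>x. if x \<in> c00 then x i else 0)"

definition functional :: "(nat \<Rightarrow> real) \<Rightarrow> (nat \<Rightarrow> real) \<Rightarrow> real" where
  "functional h = (\<lambda>x. if x \<in> c00 then pairing h x else 0)"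

lemma coord_in_dual_space: "coord i \<in> dual_space M"
  unfolding dual_space_def coord_def using c00_lincomb abs_le_normM
  by (auto intro!: exI[of _ 1])

lemma functional_in_dual_space:
  assumes "pairing_bounded M h r"
  shows "functional h \<in> dual_space M" "dual_norm M (functional h) \<le> r"
proof -
  have "pairing h (\<lambda>n. a * x n + b * y n) = a * pairing h x + b * pairing h y" if "x \<in> c00" "y \<in> c00" for x y a b
    using pairing_lincomb_left[OF that] by (simp add: pairing_commute)
  then show "functional h \<in> dual_space M"
    unfolding dual_space_def functional_def using c00_lincomb abs_pairing_le[OF assms]
    by (auto intro!: exI[of _ r])
  show "dual_norm M (functional h) \<le> r"
  proof (rule dual_norm_least)
    fix x
    assume x: "x \<in> c00" "normM M x \<le> 1"
    have "\<bar>pairing h x\<bar> \<le> r * normM M x" by (rule abs_pairing_le[OF assms x(1)])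
    also have "\<dots> \<le> r * 1" using x(2) pairing_bounded_nonneg[OF assms] by (rule mult_left_mono)
    finally show "\<bar>functional h x\<bar> \<le> r" using x(1) by (simp add: functional_def)
  qed
qed

lemma functional_eq_sum_coord:
  assumes "supp h \<subseteq> {..<L}"
  shows "functional h = (\<lambda>x. \<Sum>i<L. h i * coord i x)"
proof
  fix x
  have "pairing h x = (\<Sum>i<L. h i * x i)" if "x \<in> c00"
    using assms by (intro pairing_eq_sum) auto
  then show "functional h x = (\<Sum>i<L. h i * coord i x)"
    unfolding functional_def coord_def by simp
qed

lemma sum_coord_in_dual_space: "(\<lambda>x. \<Sum>i<L. c i * coord i x) \<in> dual_space M"
proof (induction L)
  case 0
  then show ?case using dual_space_lincomb[OF coord_in_dual_space[of 0 M] coord_in_dual_space[of 0 M], of 0 0] by simp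
next
  case (Suc L)
  then show ?case using dual_space_lincomb[OF Suc coord_in_dual_space[of L M], of 1 "c L"] by simp
qed

lemma obtain_successive_intervals:
  fixes P :: "nat \<Rightarrow> nat \<Rightarrow> bool"
  assumes "\<And>K. \<exists>m n. K \<le> m \<and> m < n \<and> P m n"
  obtains mm nn where "\<And>j. mm j < nn j" "\<And>j. nn j \<le> mm (Suc j)" "\<And>j. P (mm j) (nn j)"
proof -
  have "\<forall>K. \<exists>p. K \<le> fst p \<and> fst p < snd p \<and> P (fst p) (snd p)" using assms by auto
  from choice[OF this] obtain g where g: "\<And>K. K \<le> fst (g K) \<and> fst (g K) < snd (g K) \<and> P (fst (g K)) (snd (g K))"
    by blast
  define start where "start = rec_nat 0 (\<lambda>j l. snd (g l))"
  have start: "start (Suc j) = snd (g (start j))" for j unfolding start_def by simp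
  show ?thesis
  proof (rule that)
    show "fst (g (start j)) < snd (g (start j))" "P (fst (g (start j))) (snd (g (start j)))" for j
      using g by blast+
    show "snd (g (start j)) \<le> fst (g (start (Suc j)))" for j
      using g[of "start (Suc j)"] unfolding start by blast
  qed
qed

lemma proj_diff: "n \<le> m \<Longrightarrow> (\<lambda>i. proj m a i - proj n a i) = restr {n..<m} a"
  by (auto simp: proj_def restr_def fun_eq_iff)

locale bidual_element =
  fixes M :: "nat set set" and \<Phi> :: "((nat \<Rightarrow> real) \<Rightarrow> real) \<Rightarrow> real" and C :: real
  assumes linear: "\<And>f g a b. f \<in> dual_space M \<Longrightarrow> g \<in> dual_space M \<Longrightarrow>
      \<Phi> (\<lambda>x. a * f x + b * g x) = a * \<Phi> f + b * \<Phi> g"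
    and bounded: "\<And>f. f \<in> dual_space M \<Longrightarrow> \<bar>\<Phi> f\<bar> \<le> C * dual_norm M f"
    and C_nonneg: "C \<ge> 0"
begin

definition coeff :: "nat \<Rightarrow> real" where
  "coeff i = \<Phi> (coord i)"

lemma Phi_sum_coord: "\<Phi> (\<lambda>x. \<Sum>i<L. c i * coord i x) = (\<Sum>i<L. c i * coeff i)"
proof (induction L)
  case 0
  then show ?case using linear[OF coord_in_dual_space[of 0 M] coord_in_dual_space[of 0 M], of 0 0] by simp
next
  case (Suc L)
  then show ?case
    using linear[OF sum_coord_in_dual_space[of c L M] coord_in_dual_space[of L M], of 1 "c L"]
    by (simp add: coeff_def)
qed

lemma Phi_functional:
  assumes "supp h \<subseteq> {..<L}" "L \<le> k"
  shows "\<Phi> (functional h) = pairing h (proj k coeff)"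
proof -
  have "pairing h (proj k coeff) = (\<Sum>i<L. h i * coeff i)"
    using assms by (subst pairing_eq_sum[of "{..<L}"]) (auto simp: proj_def)
  then show ?thesis using Phi_sum_coord functional_eq_sum_coord[OF assms(1)] by simp
qed

lemma proj_coeff_in_c00: "proj k coeff \<in> c00"
  unfolding proj_def by (intro c00_if_bounded_support[of k]) simp

lemma normM_proj_coeff_le: "normM M (proj k coeff) \<le> C"
proof -
  obtain h where h: "pairing_bounded M h 1" "pairing h (proj k coeff) = normM M (proj k coeff)"
    using norming_vector[OF proj_coeff_in_c00] by blast
  let ?h = "restr {..<k} h"
  have "normM M (proj k coeff) = pairing ?h (proj k coeff)"
    using h(2) pairing_restr_supp[of "proj k coeff" "{..<k}" h]
    by (simp add: pairing_commute supp_def proj_def subset_eq)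
  also have "\<dots> = \<Phi> (functional ?h)"
    by (rule Phi_functional[symmetric]) (auto simp: supp_def restr_def split: split_indicator_asm)
  also have "\<dots> \<le> C * dual_norm M (functional ?h)"
    using bounded[OF functional_in_dual_space(1)[OF pairing_bounded_restr[OF h(1)]]] by (rule abs_le_D1)
  also have "\<dots> \<le> C * 1"
    using functional_in_dual_space(2)[OF pairing_bounded_restr[OF h(1)]] C_nonneg by (rule mult_left_mono)
  finally show ?thesis by simp
qed

lemma no_successive_large_blocks:
  assumes M3: "\<forall>A :: nat set. card A = 3 \<longrightarrow> A \<in> M" and small: "small_averages (down_closure M)"
    and mn: "\<And>j. mm j < nn j" "\<And>j. nn j \<le> mm (Suc j)" and "\<delta> > 0"
    and large: "\<And>j. \<delta> \<le> normM M (restr {mm j..<nn j} coeff)"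
  shows False
proof -
  let ?Z = "\<lambda>j. restr {mm j..<nn j} coeff"
  have "?Z j \<in> c00" for j by (intro c00_if_bounded_support[of "nn j"]) (simp add: restr_def)
  then have "\<forall>j. \<exists>h. pairing_bounded M h 1 \<and> pairing h (?Z j) = normM M (?Z j)"
    using norming_vector by blast
  from choice[OF this] obtain h where h: "\<And>j. pairing_bounded M (h j) 1"
    "\<And>j. pairing (h j) (?Z j) = normM M (?Z j)"
    by blast
  define v where "v j = restr {mm j..<nn j} (h j)" for j
  have "mm j \<le> nn j - 1 \<and> nn j - 1 < mm (Suc j)" for j using mn(1)[of j] mn(2)[of j] by linarith
  then have blocks: "block_ranges mm (\<lambda>j. nn j - 1)" unfolding block_ranges_def by blast
  have v: "v j \<in> c00" "supp (v j) \<subseteq> {mm j..nn j - 1}" "pairing_bounded M (v j) 1" for j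
  proof -
    show "v j \<in> c00" unfolding v_def by (intro c00_if_bounded_support[of "nn j"]) (simp add: restr_def)
    show "supp (v j) \<subseteq> {mm j..nn j - 1}"
      unfolding v_def by (auto simp: supp_def restr_def split: split_indicator_asm)
    show "pairing_bounded M (v j) 1" unfolding v_def by (rule pairing_bounded_restr[OF h(1)])
  qed
  have v_large: "\<delta> \<le> pairing (v j) (proj L coeff)" if "nn j \<le> L" for j L
  proof -
    have "restr {mm j..<nn j} (proj L coeff) = ?Z j" using that by (auto simp: restr_def proj_def fun_eq_iff)
    then show ?thesis using h(2) large unfolding v_def by (simp add: pairing_restr)
  qed
  define \<eta> where "\<eta> = \<delta> / (2 * (C + 1))"
  have "\<eta> > 0" unfolding \<eta>_def using \<open>\<delta> > 0\<close> C_nonneg by simp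
  then obtain a D where aD: "prob_weights a D 0" "pairing_bounded M (wsum a D v) \<eta>"
    using small_average_of_blocks_le[OF M3 small blocks v(1,2,3)] by blast
  have D: "finite D" "\<And>j. j \<in> D \<Longrightarrow> 0 \<le> a j" "sum a D = 1" using aD(1) unfolding prob_weights_def by auto
  define L where "L = Max (nn ` D)"
  have nn_L: "nn j \<le> L" if "j \<in> D" for j unfolding L_def using D(1) that by simp
  have "supp (v j) \<subseteq> {..<L}" if "j \<in> D" for j
  proof
    fix n
    assume "n \<in> supp (v j)"
    then have "n \<le> nn j - 1" using v(2)[of j] by auto
    then show "n \<in> {..<L}" using nn_L[OF that] mn(1)[of j] by simp
  qed
  then have "supp (wsum a D v) \<subseteq> {..<L}" using supp_wsum[of a D v] by blast
  then have "pairing (wsum a D v) (proj L coeff) = \<Phi> (functional (wsum a D v))"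
    by (rule Phi_functional[symmetric]) simp
  also have "\<dots> \<le> C * dual_norm M (functional (wsum a D v))"
    using bounded[OF functional_in_dual_space(1)[OF aD(2)]] by (rule abs_le_D1)
  also have "\<dots> \<le> C * \<eta>"
    using functional_in_dual_space(2)[OF aD(2)] C_nonneg by (rule mult_left_mono)
  also have "\<dots> \<le> (C + 1) * \<eta>" using \<open>\<eta> > 0\<close> by simp
  also have "\<dots> = \<delta> / 2" unfolding \<eta>_def using C_nonneg by (simp add: field_simps)
  also have "\<dots> < \<delta>" using \<open>\<delta> > 0\<close> by simp
  finally have "pairing (wsum a D v) (proj L coeff) < \<delta>" .
  moreover have "pairing (wsum a D v) (proj L coeff) = (\<Sum>j\<in>D. a j * pairing (v j) (proj L coeff))"
    using pairing_wsum[OF proj_coeff_in_c00, of L a D v] by (simp add: pairing_commute)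
  moreover have "(\<Sum>j\<in>D. a j * \<delta>) \<le> (\<Sum>j\<in>D. a j * pairing (v j) (proj L coeff))"
    using D(2) v_large nn_L by (intro sum_mono mult_left_mono) auto
  ultimately show False using D(3) by (simp flip: sum_distrib_right)
qed

lemma proj_coeff_Cauchy:
  assumes M3: "\<forall>A :: nat set. card A = 3 \<longrightarrow> A \<in> M" and small: "small_averages (down_closure M)"
  shows "\<forall>\<epsilon>>0. \<exists>K. \<forall>m\<ge>K. \<forall>n\<ge>K. normM M (\<lambda>i. proj m coeff i - proj n coeff i) < \<epsilon>"
proof (rule ccontr)
  assume "\<not> ?thesis"
  then obtain \<delta> where \<delta>: "\<delta> > 0" "\<And>K. \<exists>m\<ge>K. \<exists>n\<ge>K. \<delta> \<le> normM M (\<lambda>i. proj m coeff i - proj n coeff i)"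
    by (auto simp: not_less)
  have "\<exists>m n. K \<le> m \<and> m < n \<and> \<delta> \<le> normM M (restr {m..<n} coeff)" for K
  proof -
    obtain m n where mn: "K \<le> m" "K \<le> n" "\<delta> \<le> normM M (\<lambda>i. proj m coeff i - proj n coeff i)"
      using \<delta>(2) by blast
    have c00: "restr {a..<b} coeff \<in> c00" for a b by (intro c00_if_bounded_support[of b]) (simp add: restr_def)
    consider "m < n" | "n < m" | "m = n" by linarith
    then show ?thesis
    proof cases
      case 1
      have "(\<lambda>i. proj m coeff i - proj n coeff i) = (\<lambda>i. - restr {m..<n} coeff i)"
        using 1 by (auto simp: proj_def restr_def fun_eq_iff)
      then show ?thesis using mn 1 normM_minus[OF c00] by (intro exI[of _ m] exI[of _ n]) auto
    next
      case 2
      then show ?thesis using mn proj_diff[of n m coeff] by (intro exI[of _ n] exI[of _ m]) auto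
    next
      case 3
      then show ?thesis using mn \<delta>(1) normM_zero by simp
    qed
  qed
  then obtain mm nn where "\<And>j. mm j < nn j" "\<And>j. nn j \<le> mm (Suc j)"
      "\<And>j. \<delta> \<le> normM M (restr {mm j..<nn j} coeff)"
    by (rule obtain_successive_intervals) blast
  then show False using no_successive_large_blocks[OF M3 small] \<delta>(1) by blast
qed

lemma proj_coeff_weak_limit:
  assumes M3: "\<forall>A :: nat set. card A = 3 \<longrightarrow> A \<in> M" and f: "f \<in> dual_space M"
  shows "(\<lambda>k. f (proj k coeff)) \<longlonglongrightarrow> \<Phi> f"
proof (rule LIMSEQ_I)
  fix r :: real
  assume "r > 0"
  define \<epsilon> where "\<epsilon> = r / (2 * C + 1)"
  have "\<epsilon> > 0" unfolding \<epsilon>_def using \<open>r > 0\<close> C_nonneg by simp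
  then obtain N c where Nc: "dual_norm M (\<lambda>x. if x \<in> c00 then f x - (\<Sum>i<N. c i * x i) else 0) < \<epsilon>"
    using shrinking_basis_if_three_sets[OF M3] f unfolding shrinking_basis_def shrinking_def by blast
  define G where "G = (\<lambda>x. \<Sum>i<N. c i * coord i x)"
  define g where "g = (\<lambda>x. 1 * f x + (-1) * G x)"
  have G: "G \<in> dual_space M" unfolding G_def by (rule sum_coord_in_dual_space)
  have g: "g \<in> dual_space M" unfolding g_def by (rule dual_space_lincomb[OF f G])
  have "g = (\<lambda>x. if x \<in> c00 then f x - (\<Sum>i<N. c i * x i) else 0)"
    using f unfolding g_def G_def coord_def dual_space_def by (auto simp: fun_eq_iff)
  then have g_small: "dual_norm M g < \<epsilon>" using Nc by simp
  have "\<Phi> (\<lambda>x. 1 * g x + 1 * G x) = 1 * \<Phi> g + 1 * \<Phi> G" by (rule linear[OF g G])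
  moreover have "(\<lambda>x. 1 * g x + 1 * G x) = f" unfolding g_def by simp
  ultimately have Phi_f: "\<Phi> f = \<Phi> g + (\<Sum>i<N. c i * coeff i)" using Phi_sum_coord unfolding G_def by simp
  show "\<exists>K. \<forall>k\<ge>K. norm (f (proj k coeff) - \<Phi> f) < r"
  proof (intro exI allI impI)
    fix k
    assume "N \<le> k"
    then have "G (proj k coeff) = (\<Sum>i<N. c i * coeff i)"
      unfolding G_def coord_def using proj_coeff_in_c00 by (simp add: proj_def)
    then have "f (proj k coeff) - \<Phi> f = g (proj k coeff) - \<Phi> g" unfolding g_def Phi_f by simp
    moreover have "\<bar>g (proj k coeff)\<bar> \<le> C * \<epsilon>"
    proof -
      have "\<bar>g (proj k coeff)\<bar> \<le> dual_norm M g * normM M (proj k coeff)"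
        by (rule abs_le_dual_norm_mult_normM[OF g proj_coeff_in_c00])
      also have "\<dots> \<le> \<epsilon> * C"
        using g_small normM_proj_coeff_le normM_nonneg[OF proj_coeff_in_c00] \<open>\<epsilon> > 0\<close>
        by (intro mult_mono) auto
      finally show ?thesis by (simp add: mult.commute)
    qed
    moreover have "\<bar>\<Phi> g\<bar> \<le> C * \<epsilon>"
      using bounded[OF g] mult_left_mono[OF less_imp_le[OF g_small] C_nonneg] by linarith
    moreover have "2 * C * \<epsilon> < r" unfolding \<epsilon>_def using \<open>r > 0\<close> C_nonneg by (simp add: field_simps)
    ultimately show "norm (f (proj k coeff) - \<Phi> f) < r"
      using abs_triangle_ineq4[of "g (proj k coeff)" "\<Phi> g"] unfolding real_norm_def by linarith
  qed
qed

end

theorem reflexive_space_if_compact_finite: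
  assumes cpt: "compact ((\<lambda>A. indicator A :: nat \<Rightarrow> real) ` M)"
    and M3: "\<forall>A :: nat set. card A = 3 \<longrightarrow> A \<in> M" and fin: "\<forall>A\<in>M. finite A"
  shows "reflexive_space M"
  unfolding reflexive_space_def
proof (intro allI impI)
  fix \<Phi> :: "((nat \<Rightarrow> real) \<Rightarrow> real) \<Rightarrow> real"
  assume lin: "\<forall>f\<in>dual_space M. \<forall>g\<in>dual_space M. \<forall>a b. \<Phi> (\<lambda>x. a * f x + b * g x) = a * \<Phi> f + b * \<Phi> g"
    and "\<exists>C. \<forall>f\<in>dual_space M. \<bar>\<Phi> f\<bar> \<le> C * dual_norm M f"
  then obtain C where C: "\<And>f. f \<in> dual_space M \<Longrightarrow> \<bar>\<Phi> f\<bar> \<le> C * dual_norm M f" by blast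
  have "C * dual_norm M f \<le> max C 0 * dual_norm M f" if "f \<in> dual_space M" for f
    using dual_norm_nonneg[OF that] by (intro mult_right_mono) auto
  then interpret bidual_element M \<Phi> "max C 0"
    using lin C by unfold_locales force+
  show "\<exists>y. (\<forall>k. y k \<in> c00) \<and> (\<forall>\<epsilon>>0. \<exists>K. \<forall>m\<ge>K. \<forall>n\<ge>K. normM M (\<lambda>i. y m i - y n i) < \<epsilon>) \<and>
      (\<forall>f\<in>dual_space M. (\<lambda>k. f (y k)) \<longlonglongrightarrow> \<Phi> f)"
    using proj_coeff_in_c00 proj_coeff_Cauchy[OF M3 small_averages_down_closure[OF cpt fin]]
      proj_coeff_weak_limit[OF M3]
    by (intro exI[of _ "\<lambda>k. proj k coeff"]) blast
qed

theorem lemma3p7: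
  fixes M :: "nat set set"
  assumes "compact ((\<lambda>A. indicator A :: nat \<Rightarrow> real) ` M)"
    and "\<forall>A :: nat set. card A = 3 \<longrightarrow> A \<in> M"
  shows "shrinking_basis M \<and> ((\<forall>A\<in>M. finite A) \<longrightarrow> reflexive_space M)"
  using shrinking_basis_if_three_sets[OF assms(2)] reflexive_space_if_compact_finite[OF assms] by blast

end
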